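(* Let $\mathfrak{B}=\{\mathscr{M}^{KI},\mathscr{M}^{KK},\mathscr{A}^{KK},\mathscr{H}^{KK},\mathscr{S}\}$. Then the graph parameter $p_{\mathfrak{B}}$ is equivalent to each of $\widetilde{\Delta}$, $\mathsf{cdeg}$, $\max\{\mathsf{cideg},\widetilde{\omega}\}$, $\max\{\alpha^{\ast},\widetilde{\omega}\}$ and $\max\{\theta^{\ast},\widetilde{\omega}\}$; that is, for each such parameter $q$ there are functions $f,g\colon\mathbb{N}\to\mathbb{N}$ with $p_{\mathfrak{B}}(G)\le f(q(G))$ and $q(G)\le g(p_{\mathfrak{B}}(G))$ for every finite graph $G$.
   Context: Two vertices are equivalent if they lie in exactly the same maximal cliques. $\widetilde{G}$ is the clique-quotient graph (equivalence classes as vertices, adjacency inherited from representatives), $\widetilde{\Delta}(G)$ its maximum degree. $\widetilde{\omega}(G)$ is the maximum over maximal cliques $K$ of the number of equivalence classes meeting $K$; $\mathsf{cideg}(G)$ the maximum over vertices of the number of maximal cliques containing it; $\mathsf{cdeg}(G)$ the maximum over maximal cliques $K$ of the number of other maximal cliques intersecting $K$. $\alpha^{\ast}(G)=\max_v\alpha(G[N[v]])$, $\theta^{\ast}(G)=\max_v\theta(G[N[v]])$, $\theta$ the clique-cover number. For disjoint ordered sets $X=\{x_1,\dots,x_n\}$, $Y=\{y_1,\dots,y_n\}$ and a vertex $c$: $\mathscr{S}_n$ is the star with centre $c$ and $n$ leaves; $\mathscr{M}^{KI}_n$ has edges $x_iy_i$ and $X$ a clique, $Y$ independent; $\mathscr{M}^{KK}_n$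 has edges $x_iy_i$ and $X,Y$ cliques; $\mathscr{A}^{KK}_n$ has edges $x_iy_j$ ($i\ne j$) and $X,Y$ cliques; $\mathscr{H}^{KK}_n$ has edges $x_iy_j$ ($i\le j$) and $X,Y$ cliques. For a family $\mathfrak{F}$ of such sequences, $p_{\mathfrak{F}}(G)$ is the maximum $n$ such that some $\mathscr{X}\in\mathfrak{F}$ has $\mathscr{X}_n$ as an induced subgraph of $G$. *)

theory Defs
  imports Main
begin

type_synonym 'v graph = "'v set \<times> ('v \<Rightarrow> 'v \<Rightarrow> bool)"

definition verts :: "'v graph \<Rightarrow> 'v set" where "verts G = fst G"
definition adj :: "'v graph \<Rightarrow> 'v \<Rightarrow> 'v \<Rightarrow> bool" where "adj G = snd G"

definition fin_simple_graph :: "'v graph \<Rightarrow> bool" where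
  "fin_simple_graph G \<longleftrightarrow> finite (verts G) \<and>
     (\<forall>u v. adj G u v \<longrightarrow> u \<in> verts G \<and> v \<in> verts G \<and> u \<noteq> v \<and> adj G v u)"

definition maxn :: "nat set \<Rightarrow> nat" where
  "maxn S = (if S = {} then 0 else Max S)"

definition clique :: "'v graph \<Rightarrow> 'v set \<Rightarrow> bool" where
  "clique G K \<longleftrightarrow> K \<subseteq> verts G \<and> (\<forall>u\<in>K. \<forall>v\<in>K. u \<noteq> v \<longrightarrow> adj G u v)"

definition max_clique :: "'v graph \<Rightarrow> 'v set \<Rightarrow> bool" where
  "max_clique G K \<longleftrightarrow> clique G K \<and> (\<forall>K'. clique G K' \<and> K \<subseteq> K' \<longrightarrow> K' = K)"

definition max_cliques :: "'v graph \<Rightarrow> 'v set set" where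
  "max_cliques G = {K. max_clique G K}"

definition indep :: "'v graph \<Rightarrow> 'v set \<Rightarrow> bool" where
  "indep G S \<longleftrightarrow> S \<subseteq> verts G \<and> (\<forall>u\<in>S. \<forall>v\<in>S. \<not> adj G u v)"

definition closed_nbhd :: "'v graph \<Rightarrow> 'v \<Rightarrow> 'v set" where
  "closed_nbhd G v = insert v {u \<in> verts G. adj G v u}"

definition alpha_on :: "'v graph \<Rightarrow> 'v set \<Rightarrow> nat" where
  "alpha_on G S = maxn {card I | I. I \<subseteq> S \<and> indep G I}"

definition theta_on :: "'v graph \<Rightarrow> 'v set \<Rightarrow> nat" where
  "theta_on G S = (LEAST k. \<exists>F. finite F \<and> card F = k \<and> (\<forall>C\<in>F. clique G C) \<and> \<Union>F = S)"

definition cequiv :: "'v graph \<Rightarrow> 'v \<Rightarrow> 'v \<Rightarrow> bool" where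
  "cequiv G u v \<longleftrightarrow> {K \<in> max_cliques G. u \<in> K} = {K \<in> max_cliques G. v \<in> K}"

definition cclass :: "'v graph \<Rightarrow> 'v \<Rightarrow> 'v set" where
  "cclass G v = {u \<in> verts G. cequiv G u v}"

definition cclasses :: "'v graph \<Rightarrow> 'v set set" where
  "cclasses G = cclass G ` verts G"

definition quotient_graph :: "'v graph \<Rightarrow> 'v set graph" where
  "quotient_graph G = (cclasses G,
     (\<lambda>C D. C \<in> cclasses G \<and> D \<in> cclasses G \<and> C \<noteq> D \<and> (\<exists>u\<in>C. \<exists>v\<in>D. adj G u v)))"

definition max_degree :: "'v graph \<Rightarrow> nat" where
  "max_degree G = maxn {card {u \<in> verts G. adj G v u} | v. v \<in> verts G}"

definition Delta_tilde :: "'v graph \<Rightarrow> nat" where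
  "Delta_tilde G = max_degree (quotient_graph G)"

definition omega_tilde :: "'v graph \<Rightarrow> nat" where
  "omega_tilde G = maxn {card {C \<in> cclasses G. C \<inter> K \<noteq> {}} | K. K \<in> max_cliques G}"

definition cideg :: "'v graph \<Rightarrow> nat" where
  "cideg G = maxn {card {K \<in> max_cliques G. v \<in> K} | v. v \<in> verts G}"

definition cdeg :: "'v graph \<Rightarrow> nat" where
  "cdeg G = maxn {card {K' \<in> max_cliques G. K' \<noteq> K \<and> K' \<inter> K \<noteq> {}} | K. K \<in> max_cliques G}"

definition alpha_star :: "'v graph \<Rightarrow> nat" where
  "alpha_star G = maxn {alpha_on G (closed_nbhd G v) | v. v \<in> verts G}"

definition theta_star :: "'v graph \<Rightarrow> nat" where
  "theta_star G = maxn {theta_on G (closed_nbhd G v) | v. v \<in> verts G}"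

text \<open>Vertices x_i, y_i (i = 1..n) and the centre c.\<close>
datatype pv = Xv nat | Yv nat | Cv

definition symcl :: "(pv \<Rightarrow> pv \<Rightarrow> bool) \<Rightarrow> pv \<Rightarrow> pv \<Rightarrow> bool" where
  "symcl R u v \<longleftrightarrow> u \<noteq> v \<and> (R u v \<or> R v u)"

definition XY :: "nat \<Rightarrow> pv set" where
  "XY n = Xv ` {1..n} \<union> Yv ` {1..n}"

definition star_seq :: "nat \<Rightarrow> pv graph" where
  "star_seq n = (insert Cv (Yv ` {1..n}),
     symcl (\<lambda>u v. case (u, v) of (Cv, Yv j) \<Rightarrow> 1 \<le> j \<and> j \<le> n | _ \<Rightarrow> False))"

definition MKI_seq :: "nat \<Rightarrow> pv graph" where
  "MKI_seq n = (XY n,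
     symcl (\<lambda>u v. case (u, v) of
        (Xv i, Yv j) \<Rightarrow> i \<in> {1..n} \<and> j \<in> {1..n} \<and> i = j
      | (Xv i, Xv j) \<Rightarrow> i \<in> {1..n} \<and> j \<in> {1..n}
      | _ \<Rightarrow> False))"

definition MKK_seq :: "nat \<Rightarrow> pv graph" where
  "MKK_seq n = (XY n,
     symcl (\<lambda>u v. case (u, v) of
        (Xv i, Yv j) \<Rightarrow> i \<in> {1..n} \<and> j \<in> {1..n} \<and> i = j
      | (Xv i, Xv j) \<Rightarrow> i \<in> {1..n} \<and> j \<in> {1..n}
      | (Yv i, Yv j) \<Rightarrow> i \<in> {1..n} \<and> j \<in> {1..n}
      | _ \<Rightarrow> False))"

definition AKK_seq :: "nat \<Rightarrow> pv graph" where
  "AKK_seq n = (XY n,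
     symcl (\<lambda>u v. case (u, v) of
        (Xv i, Yv j) \<Rightarrow> i \<in> {1..n} \<and> j \<in> {1..n} \<and> i \<noteq> j
      | (Xv i, Xv j) \<Rightarrow> i \<in> {1..n} \<and> j \<in> {1..n}
      | (Yv i, Yv j) \<Rightarrow> i \<in> {1..n} \<and> j \<in> {1..n}
      | _ \<Rightarrow> False))"

definition HKK_seq :: "nat \<Rightarrow> pv graph" where
  "HKK_seq n = (XY n,
     symcl (\<lambda>u v. case (u, v) of
        (Xv i, Yv j) \<Rightarrow> i \<in> {1..n} \<and> j \<in> {1..n} \<and> i \<le> j
      | (Xv i, Xv j) \<Rightarrow> i \<in> {1..n} \<and> j \<in> {1..n}
      | (Yv i, Yv j) \<Rightarrow> i \<in> {1..n} \<and> j \<in> {1..n}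
      | _ \<Rightarrow> False))"

definition induced_sub :: "'w graph \<Rightarrow> 'v graph \<Rightarrow> bool" where
  "induced_sub H G \<longleftrightarrow> (\<exists>\<phi>. inj_on \<phi> (verts H) \<and> \<phi> ` verts H \<subseteq> verts G \<and>
      (\<forall>u\<in>verts H. \<forall>v\<in>verts H. adj G (\<phi> u) (\<phi> v) \<longleftrightarrow> adj H u v))"

definition p_fam :: "(nat \<Rightarrow> pv graph) set \<Rightarrow> 'v graph \<Rightarrow> nat" where
  "p_fam F G = maxn {n. \<exists>X\<in>F. induced_sub (X n) G}"

definition frakB :: "(nat \<Rightarrow> pv graph) set" where
  "frakB = {MKI_seq, MKK_seq, AKK_seq, HKK_seq, star_seq}"

definition param_equiv :: "(nat graph \<Rightarrow> nat) \<Rightarrow> (nat graph \<Rightarrow> nat) \<Rightarrow> bool" where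
  "param_equiv p q \<longleftrightarrow> (\<exists>f g :: nat \<Rightarrow> nat. \<forall>G. fin_simple_graph G \<longrightarrow>
      p G \<le> f (q G) \<and> q G \<le> g (p G))"

end

theory Submission
  imports Defs "HOL-Library.Ramsey"
begin

text \<open>
  An induced pattern of order \<open>n\<close> yields either \<open>n\<close> independent neighbours of one vertex
  (the star) or a clique of \<open>n\<close> pairwise inequivalent vertices (the four other patterns, in
  which the \<open>Y\<close>-vertices separate the \<open>X\<close>-vertices); hence \<open>p_fam frakB\<close> is at most
  \<open>max alpha_star omega_tilde\<close>. Counting maximal cliques through the classes they meet gives
  \<open>alpha_star \<le> theta_star \<le> cideg\<close>, exponential bounds for \<open>cideg\<close> and \<open>omega_tilde\<close> in
  terms of both \<open>Delta_tilde\<close> and \<open>cdeg\<close>, and \<open>cdeg \<le> omega_tilde * cideg\<close>.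

  It remains to bound \<open>Delta_tilde\<close> by a function of \<open>p_fam frakB\<close>. Representatives of the
  classes adjacent to the class of a vertex \<open>v\<close> can be chosen adjacent to \<open>v\<close>; by Ramsey's
  theorem many of them are independent, giving a star, or they contain a large clique \<open>X\<close> of
  pairwise inequivalent vertices. The neighbourhoods outside \<open>X\<close> of the vertices of \<open>X\<close> are
  then pairwise distinct. Splitting this family repeatedly by a vertex that separates two of its
  members yields \<open>x\<^sub>k \<in> X\<close> and \<open>w\<^sub>k \<notin> X\<close> such that, for \<open>i < k\<close>, adjacency of \<open>x\<^sub>k\<close>
  and \<open>w\<^sub>i\<close> depends only on \<open>i\<close> and differs from that of \<open>x\<^sub>i\<close> and \<open>w\<^sub>i\<close>. An ordered
  Ramsey argument then leaves a matching, a co-matching or a half graph between a clique and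
  a clique or independent set, i.e. one of the five patterns.
\<close>

hide_const (open) Ramsey.clique Ramsey.indep


lemma le_maxn: "finite S \<Longrightarrow> n \<in> S \<Longrightarrow> n \<le> maxn S"
  by (auto simp: maxn_def)

lemma maxn_le:
  assumes "\<And>n. n \<in> S \<Longrightarrow> n \<le> b"
  shows "maxn S \<le> b"
proof -
  have "finite S"
    using assms finite_nat_set_iff_bounded_le by blast
  then show ?thesis
    using assms by (simp add: maxn_def)
qed

lemma maxn_in: "finite S \<Longrightarrow> S \<noteq> {} \<Longrightarrow> maxn S \<in> S"
  by (auto simp: maxn_def)

lemma le_maxn_image: "finite A \<Longrightarrow> x \<in> A \<Longrightarrow> f x \<le> maxn (f ` A)"
  by (simp add: le_maxn)

lemma maxn_image_le: "(\<And>x. x \<in> A \<Longrightarrow> f x \<le> b) \<Longrightarrow> maxn (f ` A) \<le> b"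
  by (rule maxn_le) blast

lemma max_clique_adj: "max_clique G K \<Longrightarrow> u \<in> K \<Longrightarrow> v \<in> K \<Longrightarrow> u \<noteq> v \<Longrightarrow> adj G u v"
  by (auto simp: max_clique_def Defs.clique_def)

lemma max_clique_subset_verts: "max_clique G K \<Longrightarrow> K \<subseteq> verts G"
  by (simp add: max_clique_def Defs.clique_def)

lemma cequiv_iff: "cequiv G u v \<longleftrightarrow> (\<forall>K. max_clique G K \<longrightarrow> (u \<in> K \<longleftrightarrow> v \<in> K))"
  by (auto simp: cequiv_def max_cliques_def)

lemma cequiv_sym: "cequiv G u v \<Longrightarrow> cequiv G v u"
  by (simp add: cequiv_def)

lemma cclass_self: "v \<in> verts G \<Longrightarrow> v \<in> cclass G v"
  by (simp add: cclass_def cequiv_def)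

lemma cclass_eq_iff: "u \<in> verts G \<Longrightarrow> cclass G u = cclass G v \<longleftrightarrow> cequiv G u v"
  by (auto simp: cclass_def cequiv_def)

lemma cclass_of_mem: "C \<in> cclasses G \<Longrightarrow> u \<in> C \<Longrightarrow> C = cclass G u"
  by (auto simp: cclasses_def cclass_def cequiv_def)

lemma cclass_in_cclasses: "v \<in> verts G \<Longrightarrow> cclass G v \<in> cclasses G"
  by (simp add: cclasses_def)

lemma verts_quotient_graph: "verts (quotient_graph G) = cclasses G"
  by (simp add: verts_def quotient_graph_def)

lemma adj_quotient_graph: "adj (quotient_graph G) C D \<longleftrightarrow>
    C \<in> cclasses G \<and> D \<in> cclasses G \<and> C \<noteq> D \<and> (\<exists>u\<in>C. \<exists>v\<in>D. adj G u v)"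
  by (simp add: adj_def quotient_graph_def)

abbreviation cliques_at :: "'v graph \<Rightarrow> 'v \<Rightarrow> 'v set set" where
  "cliques_at G v \<equiv> {K \<in> max_cliques G. v \<in> K}"

abbreviation classes_meeting :: "'v graph \<Rightarrow> 'v set \<Rightarrow> 'v set set" where
  "classes_meeting G K \<equiv> {C \<in> cclasses G. C \<inter> K \<noteq> {}}"

abbreviation clique_nbrs :: "'v graph \<Rightarrow> 'v set \<Rightarrow> 'v set set" where
  "clique_nbrs G K \<equiv> {K' \<in> max_cliques G. K' \<noteq> K \<and> K' \<inter> K \<noteq> {}}"

definition class_nbrs :: "'v graph \<Rightarrow> 'v \<Rightarrow> 'v set set" where
  "class_nbrs G v = {D \<in> cclasses G. adj (quotient_graph G) (cclass G v) D}"

lemma cliques_meeting_cclass: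
  "{K \<in> max_cliques G. cclass G u \<inter> K \<noteq> {}} = cliques_at G u" if "u \<in> verts G"
  using that cclass_self[OF that] by (auto simp: cclass_def cequiv_def)

lemma inj_on_classes_meeting: "inj_on (classes_meeting G) (max_cliques G)"
proof -
  have subset: "K \<subseteq> K'" if K: "K \<in> max_cliques G" and K': "K' \<in> max_cliques G"
    and eq: "classes_meeting G K = classes_meeting G K'" for K K'
  proof
    fix u assume u: "u \<in> K"
    then have uV: "u \<in> verts G"
      using max_clique_subset_verts[of G K] K by (simp add: max_cliques_def subset_iff)
    then have "cclass G u \<in> classes_meeting G K"
      using u cclass_self[OF uV] cclass_in_cclasses[OF uV] by blast
    then have "cclass G u \<inter> K' \<noteq> {}"
      unfolding eq by blast
    then have "K' \<in> cliques_at G u"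
      using K' cliques_meeting_cclass[OF uV] by blast
    then show "u \<in> K'"
      by blast
  qed
  show ?thesis
  proof (rule inj_onI)
    fix K K' assume "K \<in> max_cliques G" "K' \<in> max_cliques G"
      "classes_meeting G K = classes_meeting G K'"
    then show "K = K'"
      using subset[of K K'] subset[of K' K] by (intro subset_antisym) simp_all
  qed
qed

lemma theta_on_le_card:
  assumes "finite F" "\<forall>C\<in>F. clique G C" "\<Union>F = S"
  shows "theta_on G S \<le> card F"
  unfolding theta_on_def using assms by (intro Least_le) blast

lemma theta_on_attained:
  assumes "S \<subseteq> verts G" "finite S"
  obtains F where "finite F" "card F = theta_on G S" "\<forall>C\<in>F. clique G C" "\<Union>F = S"
proof -
  have "\<exists>F. finite F \<and> card F = card ((\<lambda>v. {v}) ` S) \<and> (\<forall>C\<in>F. clique G C) \<and> \<Union>F = S"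
    using assms by (intro exI[of _ "(\<lambda>v. {v}) ` S"]) (auto simp: Defs.clique_def)
  then have "\<exists>F. finite F \<and> card F = theta_on G S \<and> (\<forall>C\<in>F. clique G C) \<and> \<Union>F = S"
    unfolding theta_on_def by (rule LeastI_ex[OF exI])
  then show thesis
    using that by blast
qed

lemma alpha_on_le_theta_on:
  assumes S: "S \<subseteq> verts G" "finite S"
  shows "alpha_on G S \<le> theta_on G S"
  unfolding alpha_on_def
proof (rule maxn_le)
  obtain F where F: "finite F" "card F = theta_on G S" "\<forall>C\<in>F. clique G C" "\<Union>F = S"
    using theta_on_attained[OF S] by blast
  fix n assume "n \<in> {card I |I. I \<subseteq> S \<and> indep G I}"
  then obtain I where I: "I \<subseteq> S" "indep G I" and n: "n = card I"
    by blast
  have "\<forall>u\<in>I. \<exists>C. C \<in> F \<and> u \<in> C"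
    using I(1) F(4) by blast
  then obtain f where f: "\<forall>u\<in>I. f u \<in> F \<and> u \<in> f u"
    by (auto dest: bchoice)
  have "inj_on f I"
  proof (rule inj_onI)
    fix a b assume ab: "a \<in> I" "b \<in> I" "f a = f b"
    have "clique G (f a)" "a \<in> f a" "b \<in> f a"
      using F(3) f ab by auto
    then have "a = b \<or> adj G a b"
      by (auto simp: Defs.clique_def)
    then show "a = b"
      using I(2) ab by (auto simp: Defs.indep_def)
  qed
  then have "card I \<le> card F"
    using f F(1) by (intro card_inj_on_le) auto
  then show "n \<le> theta_on G S"
    using n F(2) by simp
qed

definition inequiv_clique :: "'v graph \<Rightarrow> 'v set \<Rightarrow> bool" where
  "inequiv_clique G X \<longleftrightarrow> clique G X \<and> (\<forall>a\<in>X. \<forall>b\<in>X. a \<noteq> b \<longrightarrow> \<not> cequiv G a b)"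

context
  fixes G :: "'v graph"
  assumes G: "fin_simple_graph G"
begin

lemma finite_verts: "finite (verts G)"
  using G by (simp add: fin_simple_graph_def)

lemma adj_commute: "adj G u v \<longleftrightarrow> adj G v u"
  using G by (auto simp: fin_simple_graph_def)

lemma adj_irrefl: "\<not> adj G v v"
  using G by (auto simp: fin_simple_graph_def)

lemma adj_in_verts: "adj G u v \<Longrightarrow> u \<in> verts G" "adj G u v \<Longrightarrow> v \<in> verts G"
  using G by (auto simp: fin_simple_graph_def)

lemma finite_max_cliques: "finite (max_cliques G)"
proof (rule finite_subset)
  show "max_cliques G \<subseteq> Pow (verts G)"
    by (auto simp: max_cliques_def max_clique_def Defs.clique_def)
qed (simp add: finite_verts)

lemma clique_imp_in_max_clique:
  assumes "clique G C"
  shows "\<exists>K. max_clique G K \<and> C \<subseteq> K"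
  using assms
proof (induction "card (verts G) - card C" arbitrary: C rule: less_induct)
  case less
  show ?case
  proof (cases "max_clique G C")
    case False
    then obtain C' where C': "clique G C'" "C \<subset> C'"
      using less.prems by (auto simp: max_clique_def)
    then have "C' \<subseteq> verts G"
      by (simp add: Defs.clique_def)
    then have "card C < card C'" "card C' \<le> card (verts G)"
      using C'(2) finite_verts by (auto intro: psubset_card_mono card_mono finite_subset)
    then have "card (verts G) - card C' < card (verts G) - card C"
      by linarith
    then show ?thesis
      using less.hyps C' by blast
  qed blast
qed

lemma vertex_in_max_clique:
  assumes "v \<in> verts G"
  shows "\<exists>K. max_clique G K \<and> v \<in> K"
  using clique_imp_in_max_clique[of "{v}"] assms by (auto simp: Defs.clique_def)

lemma edge_in_max_clique:
  assumes "adj G u v"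
  shows "\<exists>K. max_clique G K \<and> u \<in> K \<and> v \<in> K"
  using clique_imp_in_max_clique[of "{u, v}"] assms adj_in_verts[OF assms] adj_commute
  by (auto simp: Defs.clique_def)

lemma nonadj_of_not_in_max_clique:
  assumes K: "max_clique G K" and x: "x \<in> verts G" "x \<notin> K"
  obtains w where "w \<in> K" "w \<noteq> x" "\<not> adj G w x"
proof (rule ccontr)
  assume "\<not> thesis"
  with that have "\<forall>w\<in>K. w \<noteq> x \<longrightarrow> adj G w x" by blast
  then have "clique G (insert x K)"
    using K x adj_commute by (auto simp: max_clique_def Defs.clique_def)
  then show False
    using K x by (auto simp: max_clique_def)
qed

lemma not_cequiv_if_distinguished:
  assumes "adj G w a" "\<not> adj G w b" "w \<noteq> b"
  shows "\<not> cequiv G a b"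
proof
  assume "cequiv G a b"
  obtain K where "max_clique G K" "w \<in> K" "a \<in> K"
    using edge_in_max_clique[OF assms(1)] by blast
  with \<open>cequiv G a b\<close> have "b \<in> K"
    by (simp add: cequiv_iff)
  then show False
    using max_clique_adj[OF \<open>max_clique G K\<close> \<open>w \<in> K\<close>] assms(2,3) by blast
qed

lemma adj_cequiv:
  assumes "cequiv G u v" "adj G u w" "v \<noteq> w"
  shows "adj G v w"
proof -
  obtain K where "max_clique G K" "u \<in> K" "w \<in> K"
    using edge_in_max_clique[OF assms(2)] by blast
  with assms(1) have "v \<in> K"
    by (simp add: cequiv_iff)
  then show ?thesis
    using max_clique_adj[OF \<open>max_clique G K\<close> _ \<open>w \<in> K\<close> assms(3)] by blast
qed

lemma finite_cclasses: "finite (cclasses G)"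
  by (simp add: cclasses_def finite_verts)

lemma finite_closed_nbhd: "finite (closed_nbhd G v)"
  using finite_verts by (simp add: closed_nbhd_def)

lemma Union_cliques_at:
  assumes v: "v \<in> verts G"
  shows "\<Union>(cliques_at G v) = closed_nbhd G v"
proof
  show "\<Union>(cliques_at G v) \<subseteq> closed_nbhd G v"
  proof
    fix u assume "u \<in> \<Union>(cliques_at G v)"
    then obtain K where "max_clique G K" "v \<in> K" "u \<in> K"
      by (auto simp: max_cliques_def)
    then show "u \<in> closed_nbhd G v"
      using max_clique_adj[of G K v u] max_clique_subset_verts[of G K] by (auto simp: closed_nbhd_def)
  qed
  show "closed_nbhd G v \<subseteq> \<Union>(cliques_at G v)"
  proof
    fix u assume u: "u \<in> closed_nbhd G v"
    show "u \<in> \<Union>(cliques_at G v)"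
    proof (cases "u = v")
      case True
      then show ?thesis
        using vertex_in_max_clique[OF v] by (auto simp: max_cliques_def)
    next
      case False
      then have "adj G v u"
        using u by (simp add: closed_nbhd_def)
      then show ?thesis
        using edge_in_max_clique[OF \<open>adj G v u\<close>] by (auto simp: max_cliques_def)
    qed
  qed
qed

section \<open>Inequalities between the parameters\<close>

lemma card_cliques_at_le_cideg: "v \<in> verts G \<Longrightarrow> card (cliques_at G v) \<le> cideg G"
  unfolding cideg_def Setcompr_eq_image by (rule le_maxn_image[OF finite_verts])

lemma card_classes_meeting_le_omega_tilde:
  "max_clique G K \<Longrightarrow> card (classes_meeting G K) \<le> omega_tilde G"
  unfolding omega_tilde_def Setcompr_eq_image
  by (rule le_maxn_image[OF finite_max_cliques]) (simp add: max_cliques_def)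

lemma card_clique_nbrs_le_cdeg: "max_clique G K \<Longrightarrow> card (clique_nbrs G K) \<le> cdeg G"
  unfolding cdeg_def Setcompr_eq_image
  by (rule le_maxn_image[OF finite_max_cliques]) (simp add: max_cliques_def)

lemma card_class_nbrs_le_Delta_tilde: "v \<in> verts G \<Longrightarrow> card (class_nbrs G v) \<le> Delta_tilde G"
  unfolding Delta_tilde_def max_degree_def class_nbrs_def verts_quotient_graph Setcompr_eq_image
  by (rule le_maxn_image[OF finite_cclasses cclass_in_cclasses])

lemma card_indep_nbhd_le_alpha_star:
  assumes "c \<in> verts G" "I \<subseteq> closed_nbhd G c" "indep G I"
  shows "card I \<le> alpha_star G"
proof -
  have "finite {card J |J. J \<subseteq> closed_nbhd G c \<and> indep G J}"
    using finite_closed_nbhd by simp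
  then have "card I \<le> alpha_on G (closed_nbhd G c)"
    unfolding alpha_on_def using assms by (intro le_maxn) auto
  also have "\<dots> \<le> alpha_star G"
    unfolding alpha_star_def Setcompr_eq_image by (rule le_maxn_image[OF finite_verts assms(1)])
  finally show ?thesis .
qed

lemma card_inequiv_clique_le_omega_tilde:
  assumes X: "inequiv_clique G X"
  shows "card X \<le> omega_tilde G"
proof -
  obtain K where K: "max_clique G K" "X \<subseteq> K"
    using clique_imp_in_max_clique X unfolding inequiv_clique_def by blast
  have XV: "X \<subseteq> verts G"
    using X by (simp add: inequiv_clique_def Defs.clique_def)
  have "inj_on (cclass G) X"
  proof (rule inj_onI)
    fix a b assume "a \<in> X" "b \<in> X" "cclass G a = cclass G b"
    then show "a = b"
      using X cclass_eq_iff[of a G b] XV by (auto simp: inequiv_clique_def)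
  qed
  moreover have "cclass G ` X \<subseteq> classes_meeting G K"
  proof
    fix C assume "C \<in> cclass G ` X"
    then obtain a where "a \<in> X" "C = cclass G a"
      by blast
    then show "C \<in> classes_meeting G K"
      using K(2) XV cclass_self[of a G] cclass_in_cclasses[of a G] by blast
  qed
  ultimately have "card X \<le> card (classes_meeting G K)"
    using finite_cclasses by (intro card_inj_on_le) auto
  also have "\<dots> \<le> omega_tilde G"
    using card_classes_meeting_le_omega_tilde[OF K(1)] .
  finally show ?thesis .
qed

lemma Delta_tilde_attained:
  assumes "Delta_tilde G > 0"
  obtains v where "v \<in> verts G" "card (class_nbrs G v) = Delta_tilde G"
proof -
  let ?S = "{card {D \<in> cclasses G. adj (quotient_graph G) C D} | C. C \<in> cclasses G}"
  have eq: "Delta_tilde G = maxn ?S"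
    by (simp add: Delta_tilde_def max_degree_def verts_quotient_graph)
  have "?S \<noteq> {}"
    using assms by (metis eq maxn_def less_irrefl)
  moreover have "finite ?S"
    using finite_cclasses by simp
  ultimately have "Delta_tilde G \<in> ?S"
    unfolding eq by (rule maxn_in[rotated])
  then obtain C where C: "C \<in> cclasses G" "Delta_tilde G = card {D \<in> cclasses G. adj (quotient_graph G) C D}"
    by blast
  then obtain v where "v \<in> verts G" "C = cclass G v"
    by (auto simp: cclasses_def)
  then show thesis
    using that C(2) by (simp add: class_nbrs_def)
qed

lemma classes_meeting_subset_class_nbrs:
  assumes K: "max_clique G K" and u: "u \<in> K"
  shows "classes_meeting G K \<subseteq> insert (cclass G u) (class_nbrs G u)"
proof
  fix C assume C: "C \<in> classes_meeting G K"
  then obtain u' where u': "u' \<in> C" "u' \<in> K" and "C \<in> cclasses G"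
    by blast
  moreover have uV: "u \<in> verts G"
    using max_clique_subset_verts[OF K] u by blast
  moreover have "adj G u u'" if "C \<noteq> cclass G u"
    using that cclass_of_mem[OF \<open>C \<in> cclasses G\<close> u'(1)] max_clique_adj[OF K u u'(2)] by blast
  ultimately show "C \<in> insert (cclass G u) (class_nbrs G u)"
    using cclass_self[OF uV] cclass_in_cclasses[OF uV]
    by (auto simp: class_nbrs_def adj_quotient_graph)
qed

lemma card_class_and_nbrs_le:
  assumes "v \<in> verts G"
  shows "card (insert (cclass G v) (class_nbrs G v)) \<le> Delta_tilde G + 1"
proof -
  have "finite (class_nbrs G v)"
    using finite_cclasses by (simp add: class_nbrs_def)
  then show ?thesis
    using card_class_nbrs_le_Delta_tilde[OF assms] by (simp add: card_insert_if)
qed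

lemma omega_tilde_le_Delta_tilde: "omega_tilde G \<le> Delta_tilde G + 1"
  unfolding omega_tilde_def Setcompr_eq_image
proof (rule maxn_image_le)
  fix K assume "K \<in> max_cliques G"
  then have K: "max_clique G K"
    by (simp add: max_cliques_def)
  show "card (classes_meeting G K) \<le> Delta_tilde G + 1"
  proof (cases "K = {}")
    case False
    then obtain u where u: "u \<in> K"
      by blast
    then have "card (classes_meeting G K) \<le> card (insert (cclass G u) (class_nbrs G u))"
      using classes_meeting_subset_class_nbrs[OF K u] finite_cclasses
      by (intro card_mono) (auto simp: class_nbrs_def)
    also have "\<dots> \<le> Delta_tilde G + 1"
      using card_class_and_nbrs_le max_clique_subset_verts[OF K] u by blast
    finally show ?thesis .
  qed simp
qed

text \<open>A maximal clique through \<open>v\<close> is determined by the classes it meets, and these lie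
  in the closed quotient neighbourhood of the class of \<open>v\<close>.\<close>
lemma cideg_le_exp_Delta_tilde: "cideg G \<le> 2 ^ (Delta_tilde G + 1)"
  unfolding cideg_def Setcompr_eq_image
proof (rule maxn_image_le)
  fix v assume v: "v \<in> verts G"
  let ?S = "insert (cclass G v) (class_nbrs G v)"
  have "classes_meeting G ` cliques_at G v \<subseteq> Pow ?S"
    using classes_meeting_subset_class_nbrs by (auto simp: max_cliques_def)
  moreover have "finite ?S"
    using finite_cclasses by (simp add: class_nbrs_def)
  ultimately have "card (cliques_at G v) \<le> card (Pow ?S)"
    using inj_on_subset[OF inj_on_classes_meeting[of G], of "cliques_at G v"]
    by (intro card_inj_on_le) auto
  also have "\<dots> = 2 ^ card ?S"
    using \<open>finite ?S\<close> by (simp add: card_Pow)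
  also have "\<dots> \<le> 2 ^ (Delta_tilde G + 1)"
    using card_class_and_nbrs_le[OF v] by (intro power_increasing) auto
  finally show "card (cliques_at G v) \<le> 2 ^ (Delta_tilde G + 1)" .
qed

lemma cdeg_le_omega_tilde_mult_cideg: "cdeg G \<le> omega_tilde G * cideg G"
  unfolding cdeg_def Setcompr_eq_image
proof (rule maxn_image_le)
  fix K assume "K \<in> max_cliques G"
  then have K: "max_clique G K"
    by (simp add: max_cliques_def)
  have "clique_nbrs G K \<subseteq> (\<Union>C\<in>classes_meeting G K. {K' \<in> max_cliques G. C \<inter> K' \<noteq> {}})"
  proof
    fix K' assume "K' \<in> clique_nbrs G K"
    then obtain u where "u \<in> K'" "u \<in> K" "K' \<in> max_cliques G"
      by blast
    moreover have "u \<in> verts G"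
      using max_clique_subset_verts[OF K] \<open>u \<in> K\<close> by blast
    ultimately show "K' \<in> (\<Union>C\<in>classes_meeting G K. {K' \<in> max_cliques G. C \<inter> K' \<noteq> {}})"
      using cclass_self[of u G] cclass_in_cclasses[of u G] by blast
  qed
  then have "card (clique_nbrs G K) \<le> card (\<Union>C\<in>classes_meeting G K. {K' \<in> max_cliques G. C \<inter> K' \<noteq> {}})"
    by (intro card_mono) (auto intro: finite_subset[OF _ finite_max_cliques])
  also have "\<dots> \<le> (\<Sum>C\<in>classes_meeting G K. card {K' \<in> max_cliques G. C \<inter> K' \<noteq> {}})"
    using finite_cclasses by (intro card_UN_le) simp
  also have "\<dots> \<le> (\<Sum>C\<in>classes_meeting G K. cideg G)"
  proof (rule sum_mono)
    fix C assume "C \<in> classes_meeting G K"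
    then obtain u where u: "u \<in> verts G" "C = cclass G u"
      by (auto simp: cclasses_def)
    then show "card {K' \<in> max_cliques G. C \<inter> K' \<noteq> {}} \<le> cideg G"
      using cliques_meeting_cclass[OF u(1)] card_cliques_at_le_cideg[OF u(1)] by simp
  qed
  also have "\<dots> \<le> omega_tilde G * cideg G"
    using card_classes_meeting_le_omega_tilde[OF K] by simp
  finally show "card (clique_nbrs G K) \<le> omega_tilde G * cideg G" .
qed

lemma cideg_le_cdeg: "cideg G \<le> cdeg G + 1"
  unfolding cideg_def Setcompr_eq_image
proof (rule maxn_image_le)
  fix v assume v: "v \<in> verts G"
  obtain K where K: "max_clique G K" "v \<in> K"
    using vertex_in_max_clique[OF v] by blast
  have "cliques_at G v \<subseteq> insert K (clique_nbrs G K)"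
    using K by auto
  then have "card (cliques_at G v) \<le> card (insert K (clique_nbrs G K))"
    using finite_max_cliques by (intro card_mono) auto
  also have "\<dots> \<le> cdeg G + 1"
    using card_clique_nbrs_le_cdeg[OF K(1)] finite_max_cliques
    by (simp add: card_insert_if)
  finally show "card (cliques_at G v) \<le> cdeg G + 1" .
qed

text \<open>Distinct classes meeting \<open>K\<close> lie in distinct sets of maximal cliques, all of which
  meet \<open>K\<close>.\<close>
lemma omega_tilde_le_exp_cdeg: "omega_tilde G \<le> 2 ^ (cdeg G + 1)"
  unfolding omega_tilde_def Setcompr_eq_image
proof (rule maxn_image_le)
  fix K assume "K \<in> max_cliques G"
  then have K: "max_clique G K"
    by (simp add: max_cliques_def)
  let ?S = "insert K (clique_nbrs G K)"
  let ?f = "\<lambda>C. {K' \<in> max_cliques G. C \<inter> K' \<noteq> {}}"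
  have "?f C \<subseteq> ?S" if C: "C \<in> classes_meeting G K" for C
  proof -
    obtain b where "b \<in> C" "b \<in> K" "C \<in> cclasses G"
      using C by blast
    moreover have "b \<in> verts G"
      using max_clique_subset_verts[OF K] \<open>b \<in> K\<close> by blast
    ultimately have "?f C = cliques_at G b"
      using cclass_of_mem[of C G b] cliques_meeting_cclass[of b G] by simp
    then show ?thesis
      using \<open>b \<in> K\<close> by auto
  qed
  then have "?f ` classes_meeting G K \<subseteq> Pow ?S"
    by blast
  moreover have "inj_on ?f (classes_meeting G K)"
  proof (rule inj_onI)
    fix C C' assume C: "C \<in> classes_meeting G K" and C': "C' \<in> classes_meeting G K"
      and eq: "?f C = ?f C'"
    obtain u u' where u: "u \<in> verts G" "C = cclass G u" and u': "u' \<in> verts G" "C' = cclass G u'"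
      using C C' by (auto simp: cclasses_def)
    then show "C = C'"
      using eq cliques_meeting_cclass[OF u(1)] cliques_meeting_cclass[OF u'(1)] cclass_eq_iff[OF u(1)]
      by (simp add: cequiv_def)
  qed
  moreover have "finite ?S"
    using finite_max_cliques by simp
  ultimately have "card (classes_meeting G K) \<le> card (Pow ?S)"
    by (intro card_inj_on_le) auto
  also have "\<dots> = 2 ^ card ?S"
    using \<open>finite ?S\<close> by (simp add: card_Pow)
  also have "\<dots> \<le> 2 ^ (cdeg G + 1)"
    using card_clique_nbrs_le_cdeg[OF K] finite_max_cliques
    by (intro power_increasing) (auto simp: card_insert_if)
  finally show "card (classes_meeting G K) \<le> 2 ^ (cdeg G + 1)" .
qed

lemma theta_star_le_cideg: "theta_star G \<le> cideg G"
  unfolding theta_star_def Setcompr_eq_image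
proof (rule maxn_image_le)
  fix v assume v: "v \<in> verts G"
  have "finite (cliques_at G v)"
    using finite_max_cliques by simp
  then have "theta_on G (closed_nbhd G v) \<le> card (cliques_at G v)"
    using Union_cliques_at[OF v] by (intro theta_on_le_card) (auto simp: max_cliques_def max_clique_def)
  also have "\<dots> \<le> cideg G"
    by (rule card_cliques_at_le_cideg[OF v])
  finally show "theta_on G (closed_nbhd G v) \<le> cideg G" .
qed

lemma alpha_star_le_theta_star: "alpha_star G \<le> theta_star G"
  unfolding alpha_star_def Setcompr_eq_image
proof (rule maxn_image_le)
  fix v assume v: "v \<in> verts G"
  have "alpha_on G (closed_nbhd G v) \<le> theta_on G (closed_nbhd G v)"
    using v finite_closed_nbhd by (intro alpha_on_le_theta_on) (auto simp: closed_nbhd_def)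
  also have "\<dots> \<le> theta_star G"
    unfolding theta_star_def Setcompr_eq_image by (rule le_maxn_image[OF finite_verts v])
  finally show "alpha_on G (closed_nbhd G v) \<le> theta_star G" .
qed

end

section \<open>The patterns bound \<open>p\<^sub>\<frak>B\<close> from above\<close>

lemma verts_pattern_seqs:
  "verts (MKI_seq n) = XY n" "verts (MKK_seq n) = XY n" "verts (AKK_seq n) = XY n"
  "verts (HKK_seq n) = XY n" "verts (star_seq n) = insert Cv (Yv ` {1..n})"
  by (simp_all add: verts_def MKI_seq_def MKK_seq_def AKK_seq_def HKK_seq_def star_seq_def)

lemma adj_MKI_seq:
  "adj (MKI_seq n) (Xv i) (Xv j) \<longleftrightarrow> i \<noteq> j \<and> i \<in> {1..n} \<and> j \<in> {1..n}"
  "adj (MKI_seq n) (Xv i) (Yv j) \<longleftrightarrow> i \<in> {1..n} \<and> j \<in> {1..n} \<and> i = j"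
  "adj (MKI_seq n) (Yv j) (Xv i) \<longleftrightarrow> i \<in> {1..n} \<and> j \<in> {1..n} \<and> i = j"
  "\<not> adj (MKI_seq n) (Yv i) (Yv j)"
  by (auto simp: adj_def MKI_seq_def symcl_def)

lemma adj_MKK_seq:
  "adj (MKK_seq n) (Xv i) (Xv j) \<longleftrightarrow> i \<noteq> j \<and> i \<in> {1..n} \<and> j \<in> {1..n}"
  "adj (MKK_seq n) (Xv i) (Yv j) \<longleftrightarrow> i \<in> {1..n} \<and> j \<in> {1..n} \<and> i = j"
  "adj (MKK_seq n) (Yv j) (Xv i) \<longleftrightarrow> i \<in> {1..n} \<and> j \<in> {1..n} \<and> i = j"
  "adj (MKK_seq n) (Yv i) (Yv j) \<longleftrightarrow> i \<noteq> j \<and> i \<in> {1..n} \<and> j \<in> {1..n}"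
  by (auto simp: adj_def MKK_seq_def symcl_def)

lemma adj_AKK_seq:
  "adj (AKK_seq n) (Xv i) (Xv j) \<longleftrightarrow> i \<noteq> j \<and> i \<in> {1..n} \<and> j \<in> {1..n}"
  "adj (AKK_seq n) (Xv i) (Yv j) \<longleftrightarrow> i \<in> {1..n} \<and> j \<in> {1..n} \<and> i \<noteq> j"
  "adj (AKK_seq n) (Yv j) (Xv i) \<longleftrightarrow> i \<in> {1..n} \<and> j \<in> {1..n} \<and> i \<noteq> j"
  "adj (AKK_seq n) (Yv i) (Yv j) \<longleftrightarrow> i \<noteq> j \<and> i \<in> {1..n} \<and> j \<in> {1..n}"
  by (auto simp: adj_def AKK_seq_def symcl_def)

lemma adj_HKK_seq:
  "adj (HKK_seq n) (Xv i) (Xv j) \<longleftrightarrow> i \<noteq> j \<and> i \<in> {1..n} \<and> j \<in> {1..n}"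
  "adj (HKK_seq n) (Xv i) (Yv j) \<longleftrightarrow> i \<in> {1..n} \<and> j \<in> {1..n} \<and> i \<le> j"
  "adj (HKK_seq n) (Yv j) (Xv i) \<longleftrightarrow> i \<in> {1..n} \<and> j \<in> {1..n} \<and> i \<le> j"
  "adj (HKK_seq n) (Yv i) (Yv j) \<longleftrightarrow> i \<noteq> j \<and> i \<in> {1..n} \<and> j \<in> {1..n}"
  by (auto simp: adj_def HKK_seq_def symcl_def)

lemma adj_star_seq:
  "adj (star_seq n) Cv (Yv j) \<longleftrightarrow> j \<in> {1..n}"
  "adj (star_seq n) (Yv j) Cv \<longleftrightarrow> j \<in> {1..n}"
  "\<not> adj (star_seq n) (Yv i) (Yv j)"
  "\<not> adj (star_seq n) Cv Cv"
  by (auto simp: adj_def star_seq_def symcl_def)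

lemma Xv_in_XY: "Xv i \<in> XY n \<longleftrightarrow> i \<in> {1..n}"
  and Yv_in_XY: "Yv i \<in> XY n \<longleftrightarrow> i \<in> {1..n}"
  by (auto simp: XY_def)

abbreviation XY_patterns :: "(nat \<Rightarrow> pv graph) set" where
  "XY_patterns \<equiv> {MKI_seq, MKK_seq, AKK_seq, HKK_seq}"

lemma frakB_eq: "frakB = insert star_seq XY_patterns"
  by (auto simp: frakB_def)

lemma XY_pattern_verts: "X \<in> XY_patterns \<Longrightarrow> verts (X n) = XY n"
  by (auto simp: verts_pattern_seqs)

lemma XY_pattern_adj_Xv:
  "X \<in> XY_patterns \<Longrightarrow> i \<in> {1..n} \<Longrightarrow> j \<in> {1..n} \<Longrightarrow> adj (X n) (Xv i) (Xv j) \<longleftrightarrow> i \<noteq> j"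
  by (auto simp: adj_MKI_seq adj_MKK_seq adj_AKK_seq adj_HKK_seq)

text \<open>The hypothesis \<open>i < j\<close> is needed for \<open>HKK_seq\<close>: there every \<open>Y\<close>-vertex adjacent
  to \<open>Xv j\<close> is also adjacent to \<open>Xv i\<close>.\<close>
lemma XY_pattern_separates_Xv:
  assumes "X \<in> XY_patterns" "i \<in> {1..n}" "j \<in> {1..n}" "i < j"
  shows "\<exists>u \<in> verts (X n). adj (X n) u (Xv i) \<and> \<not> adj (X n) u (Xv j) \<and> u \<noteq> Xv j"
proof -
  have Y: "Yv i \<in> verts (X n)" "Yv j \<in> verts (X n)"
    using assms(1-3) by (simp_all add: XY_pattern_verts Yv_in_XY)
  from assms(1) consider "X = MKI_seq" | "X = MKK_seq" | "X = AKK_seq" | "X = HKK_seq"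
    by blast
  then show ?thesis
  proof cases
    case 3
    then show ?thesis
      using Y(2) assms(2-4) by (intro bexI[of _ "Yv j"]) (auto simp: adj_AKK_seq)
  qed (use Y(1) assms(2-4) in \<open>intro bexI[of _ "Yv i"];
        auto simp: adj_MKI_seq adj_MKK_seq adj_HKK_seq\<close>)+
qed

lemma induced_subE:
  assumes "induced_sub H G"
  obtains \<phi> where "inj_on \<phi> (verts H)" "\<phi> ` verts H \<subseteq> verts G"
    "\<forall>u\<in>verts H. \<forall>v\<in>verts H. adj G (\<phi> u) (\<phi> v) \<longleftrightarrow> adj H u v"
  using assms by (auto simp: induced_sub_def)

lemma card_image_Yv:
  assumes "inj_on \<phi> (Yv ` {1..n})"
  shows "card (\<phi> ` Yv ` {1..n}) = n"
proof -
  have "inj_on (\<phi> \<circ> Yv) {1..n}"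
    by (rule comp_inj_on[OF _ assms]) (simp add: inj_on_def)
  then have "card ((\<phi> \<circ> Yv) ` {1..n}) = n"
    using card_image by fastforce
  then show ?thesis
    by (simp only: image_comp)
qed

lemma frakB_le_card_verts:
  assumes G: "fin_simple_graph G" and X: "X \<in> frakB" and H: "induced_sub (X n) G"
  shows "n \<le> card (verts G)"
proof -
  obtain \<phi> where \<phi>: "inj_on \<phi> (verts (X n))" "\<phi> ` verts (X n) \<subseteq> verts G"
    using H by (rule induced_subE)
  have Y: "Yv ` {1..n} \<subseteq> verts (X n)"
    using X by (auto simp: frakB_def verts_pattern_seqs XY_def)
  have "n = card (\<phi> ` Yv ` {1..n})"
    using card_image_Yv[OF inj_on_subset[OF \<phi>(1) Y]] by simp
  also have "\<dots> \<le> card (verts G)"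
    using \<phi>(2) Y finite_verts[OF G] by (intro card_mono) auto
  finally show ?thesis .
qed

lemma le_p_fam:
  assumes "fin_simple_graph G" "X \<in> frakB" "induced_sub (X n) G"
  shows "n \<le> p_fam frakB G"
proof -
  have "{n. \<exists>X\<in>frakB. induced_sub (X n) G} \<subseteq> {..card (verts G)}"
    using frakB_le_card_verts[OF assms(1)] by blast
  then have "finite {n. \<exists>X\<in>frakB. induced_sub (X n) G}"
    by (rule finite_subset) simp
  then show ?thesis
    unfolding p_fam_def by (rule le_maxn) (use assms(2,3) in blast)
qed

lemma p_fam_le:
  assumes "\<And>n X. X \<in> frakB \<Longrightarrow> induced_sub (X n) G \<Longrightarrow> n \<le> b"
  shows "p_fam frakB G \<le> b"
  unfolding p_fam_def
proof (rule maxn_le)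
  fix k assume "k \<in> {n. \<exists>X\<in>frakB. induced_sub (X n) G}"
  then show "k \<le> b"
    using assms by blast
qed

lemma XY_pattern_le_omega_tilde:
  assumes G: "fin_simple_graph G" and X: "X \<in> XY_patterns" and H: "induced_sub (X n) G"
  shows "n \<le> omega_tilde G"
proof -
  obtain \<phi> where \<phi>: "inj_on \<phi> (verts (X n))" "\<phi> ` verts (X n) \<subseteq> verts G"
    "\<forall>u\<in>verts (X n). \<forall>v\<in>verts (X n). adj G (\<phi> u) (\<phi> v) \<longleftrightarrow> adj (X n) u v"
    using H by (rule induced_subE)
  define x where "x i = \<phi> (Xv i)" for i
  have Xv: "Xv i \<in> verts (X n)" if "i \<in> {1..n}" for i
    using that by (simp add: XY_pattern_verts[OF X] Xv_in_XY)
  have x_adj: "adj G (x i) (x j) \<longleftrightarrow> i \<noteq> j" if "i \<in> {1..n}" "j \<in> {1..n}" for i j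
    using \<phi>(3) Xv[OF that(1)] Xv[OF that(2)] XY_pattern_adj_Xv[OF X that] by (simp add: x_def)
  have x_sep: "\<not> cequiv G (x i) (x j)" if ij: "i \<in> {1..n}" "j \<in> {1..n}" "i < j" for i j
  proof -
    obtain u where u: "u \<in> verts (X n)" "adj (X n) u (Xv i)" "\<not> adj (X n) u (Xv j)" "u \<noteq> Xv j"
      using XY_pattern_separates_Xv[OF X ij] by blast
    have "adj G (\<phi> u) (x i)" "\<not> adj G (\<phi> u) (x j)"
      using \<phi>(3) u(1-3) Xv[OF ij(1)] Xv[OF ij(2)] by (simp_all add: x_def)
    moreover have "\<phi> u \<noteq> x j"
      using inj_onD[OF \<phi>(1) _ u(1) Xv[OF ij(2)]] u(4) by (auto simp: x_def)
    ultimately show ?thesis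
      by (rule not_cequiv_if_distinguished[OF G])
  qed
  have x_verts: "x ` {1..n} \<subseteq> verts G"
    using \<phi>(2) Xv by (auto simp: x_def)
  have clique: "inequiv_clique G (x ` {1..n})"
    unfolding inequiv_clique_def Defs.clique_def
  proof (intro conjI ballI impI x_verts)
    fix a b assume "a \<in> x ` {1..n}" "b \<in> x ` {1..n}" "a \<noteq> b"
    then obtain i j where ij: "i \<in> {1..n}" "j \<in> {1..n}" "a = x i" "b = x j" "i \<noteq> j"
      by blast
    then show "adj G a b"
      using x_adj by blast
    from ij(5) consider "i < j" | "j < i"
      by linarith
    then show "\<not> cequiv G a b"
      using x_sep[OF ij(1,2)] x_sep[OF ij(2,1)] cequiv_sym[of G "x i" "x j"] ij(3,4) by cases auto
  qed
  have "inj_on x {1..n}"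
  proof (rule inj_onI)
    fix i j assume "i \<in> {1..n}" "j \<in> {1..n}" "x i = x j"
    then show "i = j"
      using x_adj[of i j] adj_irrefl[OF G, of "x i"] by auto
  qed
  then have "n = card (x ` {1..n})"
    by (simp add: card_image)
  also have "\<dots> \<le> omega_tilde G"
    by (rule card_inequiv_clique_le_omega_tilde[OF G clique])
  finally show ?thesis .
qed

lemma star_seq_le_alpha_star:
  assumes G: "fin_simple_graph G" and H: "induced_sub (star_seq n) G"
  shows "n \<le> alpha_star G"
proof -
  obtain \<phi> where \<phi>: "inj_on \<phi> (verts (star_seq n))" "\<phi> ` verts (star_seq n) \<subseteq> verts G"
    "\<forall>u\<in>verts (star_seq n). \<forall>v\<in>verts (star_seq n). adj G (\<phi> u) (\<phi> v) \<longleftrightarrow> adj (star_seq n) u v"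
    using H by (rule induced_subE)
  let ?I = "\<phi> ` Yv ` {1..n}"
  have Y: "Yv ` {1..n} \<subseteq> verts (star_seq n)" and C: "Cv \<in> verts (star_seq n)"
    by (auto simp: verts_pattern_seqs)
  have adj_\<phi>: "adj G (\<phi> u) (\<phi> v) \<longleftrightarrow> adj (star_seq n) u v"
    if "u \<in> verts (star_seq n)" "v \<in> verts (star_seq n)" for u v
    using \<phi>(3) that by blast
  have c: "\<phi> Cv \<in> verts G"
    using \<phi>(2) C by blast
  have "?I \<subseteq> closed_nbhd G (\<phi> Cv)"
  proof
    fix a assume "a \<in> ?I"
    then obtain j where j: "j \<in> {1..n}" "a = \<phi> (Yv j)"
      by blast
    then have "adj G (\<phi> Cv) a"
      using adj_\<phi>[OF C, of "Yv j"] j by (auto simp: adj_star_seq verts_pattern_seqs)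
    then show "a \<in> closed_nbhd G (\<phi> Cv)"
      using adj_in_verts[OF G] by (simp add: closed_nbhd_def)
  qed
  moreover have "indep G ?I"
    unfolding Defs.indep_def
  proof (intro conjI ballI)
    show "?I \<subseteq> verts G"
      using \<phi>(2) Y by blast
    fix a b assume "a \<in> ?I" "b \<in> ?I"
    then obtain i j where "i \<in> {1..n}" "j \<in> {1..n}" "a = \<phi> (Yv i)" "b = \<phi> (Yv j)"
      by blast
    then show "\<not> adj G a b"
      using adj_\<phi>[of "Yv i" "Yv j"] by (auto simp: adj_star_seq verts_pattern_seqs)
  qed
  ultimately have "card ?I \<le> alpha_star G"
    by (rule card_indep_nbhd_le_alpha_star[OF G c])
  then show ?thesis
    using card_image_Yv[OF inj_on_subset[OF \<phi>(1) Y]] by simp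
qed

theorem p_fam_le_max_alpha_star_omega_tilde:
  assumes G: "fin_simple_graph G"
  shows "p_fam frakB G \<le> max (alpha_star G) (omega_tilde G)"
proof (rule p_fam_le)
  fix n X assume X: "X \<in> frakB" and H: "induced_sub (X n) G"
  from X consider "X = star_seq" | "X \<in> XY_patterns"
    unfolding frakB_eq by blast
  then show "n \<le> max (alpha_star G) (omega_tilde G)"
  proof cases
    case 1
    then show ?thesis
      using star_seq_le_alpha_star[OF G] H by fastforce
  next
    case 2
    then show ?thesis
      using XY_pattern_le_omega_tilde[OF G 2 H] by simp
  qed
qed

section \<open>Ramsey-type lemmas\<close>

lemma ramsey_sym:
  fixes S :: "'a set" and P :: "'a \<Rightarrow> 'a \<Rightarrow> bool"
  assumes S: "finite S" "ES 2 m m \<le> card S" and P: "\<And>a b. P a b = P b a"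
  obtains T c where "T \<subseteq> S" "card T = m" "\<forall>a\<in>T. \<forall>b\<in>T. a \<noteq> b \<longrightarrow> P a b = c"
proof -
  let ?N = "ES 2 m m"
  obtain v where v: "inj_on v {..<?N}" "v ` {..<?N} \<subseteq> S"
    using S by (metis card_le_inj card_lessThan finite_lessThan)
  define f where "f e = (if \<exists>a b. e = {a, b} \<and> P (v a) (v b) then 0 else Suc 0)" for e :: "nat set"
  have f_pair: "f {a, b} = (if P (v a) (v b) then 0 else Suc 0)" for a b
    unfolding f_def using P by (auto simp: doubleton_eq_iff)
  have f: "f \<in> nsets {..<?N} 2 \<rightarrow> {..<length [m, m]}"
    by (simp add: f_def)
  obtain i H where i: "i < length [m, m]" and H: "H \<in> nsets {..<?N} ([m, m] ! i)"
    and Hf: "f ` nsets H 2 \<subseteq> {i}"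
    by (rule partn_lstE[OF ramsey2_full f refl])
  have HN: "H \<subseteq> {..<?N}" "finite H" "card H = m"
    using H i by (auto simp: nsets_def less_Suc_eq nth_Cons')
  show thesis
  proof (rule that)
    show "v ` H \<subseteq> S"
      using v(2) HN(1) by blast
    show "card (v ` H) = m"
      using HN inj_on_subset[OF v(1) HN(1)] by (simp add: card_image)
    show "\<forall>a\<in>v ` H. \<forall>b\<in>v ` H. a \<noteq> b \<longrightarrow> P a b = (i = 0)"
    proof (intro ballI impI)
    fix a b assume "a \<in> v ` H" "b \<in> v ` H" "a \<noteq> b"
    then obtain a' b' where "a' \<in> H" "b' \<in> H" "a' \<noteq> b'" "a = v a'" "b = v b'"
      by blast
    then have "{a', b'} \<in> nsets H 2"
      by simp
    then have "f {a', b'} = i"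
      using Hf by blast
    then show "P a b = (i = 0)"
      using \<open>a = v a'\<close> \<open>b = v b'\<close> by (simp add: f_pair split: if_splits)
    qed
  qed
qed

lemma ramsey_ordered_pairs:
  fixes S :: "nat set" and P :: "nat \<Rightarrow> nat \<Rightarrow> bool"
  assumes "finite S" "ES 2 m m \<le> card S"
  obtains T c where "T \<subseteq> S" "card T = m" "\<forall>a\<in>T. \<forall>b\<in>T. a < b \<longrightarrow> P a b = c"
proof -
  have sym: "P (min a b) (max a b) = P (min b a) (max b a)" for a b
    by (simp add: min.commute max.commute)
  obtain T c where T: "T \<subseteq> S" "card T = m"
    and c: "\<forall>a\<in>T. \<forall>b\<in>T. a \<noteq> b \<longrightarrow> P (min a b) (max a b) = c"
    by (rule ramsey_sym[where P = "\<lambda>a b. P (min a b) (max a b)", OF assms sym])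
  have "P a b = c" if "a \<in> T" "b \<in> T" "a < b" for a b
  proof -
    have "P (min a b) (max a b) = c"
      using c that(1,2) less_imp_neq[OF that(3)] by blast
    then show ?thesis
      using that(3) by (simp add: min_def max_def)
  qed
  then have "\<forall>a\<in>T. \<forall>b\<in>T. a < b \<longrightarrow> P a b = c"
    by blast
  then show thesis
    using that[OF T] by blast
qed

lemma pigeonhole_bool:
  fixes Q :: "'a \<Rightarrow> bool"
  assumes "finite S" "2 * m \<le> card S"
  obtains T c where "T \<subseteq> S" "card T = m" "\<forall>a\<in>T. Q a = c"
proof -
  have sum: "card {a \<in> S. Q a} + card {a \<in> S. \<not> Q a} = card S"
    using assms(1) by (subst card_Un_disjoint[symmetric]) (auto intro: arg_cong[where f = card])
  obtain c where "m \<le> card {a \<in> S. Q a = c}"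
  proof (cases "m \<le> card {a \<in> S. Q a}")
    case True
    then show thesis
      using that[of True] by simp
  next
    case False
    then show thesis
      using that[of False] sum assms(2) by simp
  qed
  then obtain T where "T \<subseteq> {a \<in> S. Q a = c}" "card T = m" "finite T"
    by (rule obtain_subset_with_card_n)
  then show thesis
    using that[of T c] by blast
qed

text \<open>Splitting a family of at least \<open>2 ^ L\<close> distinct sets repeatedly by a point that
  separates two of its members, and keeping the larger half, yields sets \<open>A k\<close> and points
  \<open>w k\<close> such that \<open>w k\<close> lies in all later sets iff it does not lie in \<open>A k\<close>.\<close>
lemma splitting_sequence:
  assumes "finite F" "2 ^ L \<le> card F"
  shows "\<exists>w d A. (\<forall>k<L. A k \<in> F \<and> w k \<in> \<Union>F \<and> (w k \<in> A k \<longleftrightarrow> \<not> d k)) \<and>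
           (\<forall>i k. i < k \<longrightarrow> k < L \<longrightarrow> (w i \<in> A k \<longleftrightarrow> d i))"
  using assms
proof (induction L arbitrary: F)
  case 0
  then show ?case by auto
next
  case (Suc L)
  have "(2::nat) \<le> 2 ^ Suc L"
    by simp
  then have "2 \<le> card F"
    using Suc.prems(2) by (rule order.trans)
  then obtain B where "B \<subseteq> F" "card B = 2" "finite B"
    by (rule obtain_subset_with_card_n)
  then obtain B1 B2 where B: "B1 \<in> F" "B2 \<in> F" "B1 \<noteq> B2"
    by (auto simp: card_2_iff)
  then obtain w0 where w0: "w0 \<in> B1 \<and> w0 \<notin> B2 \<or> w0 \<in> B2 \<and> w0 \<notin> B1"
    by blast
  define Fb where "Fb b = {S \<in> F. (w0 \<in> S) = b}" for b
  have fin: "finite (Fb b)" for b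
    using Suc.prems(1) by (simp add: Fb_def)
  have sum: "card (Fb True) + card (Fb False) = card F"
    using Suc.prems(1) unfolding Fb_def by (subst card_Un_disjoint[symmetric]) (auto intro: arg_cong[where f = card])
  obtain b where b: "2 ^ L \<le> card (Fb b)"
  proof (cases "2 ^ L \<le> card (Fb True)")
    case True
    then show thesis
      using that by blast
  next
    case False
    then show thesis
      using that[of False] sum Suc.prems(2) by simp
  qed
  obtain A0 where A0: "A0 \<in> F" "(w0 \<in> A0) = (\<not> b)"
    using w0 B by (cases b) auto
  obtain w' d' A' where
    IH1: "\<forall>k<L. A' k \<in> Fb b \<and> w' k \<in> \<Union>(Fb b) \<and> (w' k \<in> A' k \<longleftrightarrow> \<not> d' k)" and
    IH2: "\<forall>i k. i < k \<longrightarrow> k < L \<longrightarrow> (w' i \<in> A' k \<longleftrightarrow> d' i)"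
    using Suc.IH[OF fin b] by blast
  have sub: "Fb b \<subseteq> F"
    by (auto simp: Fb_def)
  define w where "w k = (if k = 0 then w0 else w' (k - 1))" for k
  define d where "d k = (if k = 0 then b else d' (k - 1))" for k
  define A where "A k = (if k = 0 then A0 else A' (k - 1))" for k
  have "A k \<in> F \<and> w k \<in> \<Union>F \<and> (w k \<in> A k \<longleftrightarrow> \<not> d k)" if "k < Suc L" for k
    using that A0 w0 B IH1 sub by (cases k) (auto simp: w_def d_def A_def)
  moreover have "w i \<in> A k \<longleftrightarrow> d i" if "i < k" "k < Suc L" for i k
    using that IH1 IH2 by (cases i; cases k) (auto simp: w_def d_def A_def Fb_def)
  ultimately show ?case
    by blast
qed

lemma enumerate_finite_nat_set:
  fixes T :: "nat set"
  assumes "finite T" "card T = Suc n"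
  obtains t where "\<And>a. a \<le> n \<Longrightarrow> t a \<in> T" "\<And>a b. a < b \<Longrightarrow> b \<le> n \<Longrightarrow> t a < t b"
proof
  let ?xs = "sorted_list_of_set T"
  have len: "length ?xs = Suc n"
    using assms by simp
  show "?xs ! a \<in> T" if "a \<le> n" for a
    using nth_mem[of a ?xs] that len assms(1) by simp
  show "?xs ! a < ?xs ! b" if "a < b" "b \<le> n" for a b
    using sorted_wrt_nth_less[OF strict_sorted_list_of_set[of T]] that assms(2) by simp
qed

definition pattern_bound :: "nat \<Rightarrow> nat" where
  "pattern_bound m = 2 * ES 2 (ES 2 m m) (ES 2 m m)"

lemma ordered_pattern:
  fixes d :: "nat \<Rightarrow> bool" and U S :: "nat \<Rightarrow> nat \<Rightarrow> bool"
  obtains t b c1 c2 where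
    "\<forall>a\<le>n. t a < pattern_bound (Suc n) \<and> d (t a) = b"
    "\<forall>a a'. a < a' \<longrightarrow> a' \<le> n \<longrightarrow> t a < t a' \<and> U (t a) (t a') = c1 \<and> S (t a) (t a') = c2"
proof -
  let ?m = "ES 2 (Suc n) (Suc n)"
  obtain T0 b where T0: "T0 \<subseteq> {..<pattern_bound (Suc n)}" "card T0 = ES 2 ?m ?m"
    and b: "\<forall>a\<in>T0. d a = b"
    by (rule pigeonhole_bool[where S = "{..<pattern_bound (Suc n)}" and Q = d and m = "ES 2 ?m ?m"])
      (auto simp: pattern_bound_def)
  obtain T1 c1 where T1: "T1 \<subseteq> T0" "card T1 = ?m"
    and c1: "\<forall>a\<in>T1. \<forall>a'\<in>T1. a < a' \<longrightarrow> U a a' = c1"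
    by (rule ramsey_ordered_pairs[where S = T0 and P = U and m = ?m])
      (use finite_subset[OF T0(1)] T0(2) in auto)
  obtain T2 c2 where T2: "T2 \<subseteq> T1" "card T2 = Suc n"
    and c2: "\<forall>a\<in>T2. \<forall>a'\<in>T2. a < a' \<longrightarrow> S a a' = c2"
    by (rule ramsey_ordered_pairs[where S = T1 and P = S and m = "Suc n"])
      (use finite_subset[OF T1(1) finite_subset[OF T0(1)]] T1(2) ES2_choose in auto)
  obtain t where t: "\<And>a. a \<le> n \<Longrightarrow> t a \<in> T2" "\<And>a a'. a < a' \<Longrightarrow> a' \<le> n \<Longrightarrow> t a < t a'"
    by (rule enumerate_finite_nat_set[OF _ T2(2)])
      (use finite_subset[OF T2(1) finite_subset[OF T1(1) finite_subset[OF T0(1)]]] in auto)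
  show thesis
  proof (rule that[of t])
    show "\<forall>a\<le>n. t a < pattern_bound (Suc n) \<and> d (t a) = b"
    proof (intro allI impI)
      fix a assume "a \<le> n"
      then have "t a \<in> T0"
        using t(1) T2(1) T1(1) by blast
      then show "t a < pattern_bound (Suc n) \<and> d (t a) = b"
        using T0(1) b by auto
    qed
    show "\<forall>a a'. a < a' \<longrightarrow> a' \<le> n \<longrightarrow> t a < t a' \<and> U (t a) (t a') = c1 \<and> S (t a) (t a') = c2"
    proof (intro allI impI)
      fix a a' assume "a < a'" "a' \<le> n"
      then have "t a \<in> T2" "t a' \<in> T2" "t a < t a'"
        using t by auto
      then show "t a < t a' \<and> U (t a) (t a') = c1 \<and> S (t a) (t a') = c2"
        using T2(1) c1 c2 by blast
    qed
  qed
qed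

section \<open>Embedding the patterns\<close>

definition xy_pattern ::
  "'v graph \<Rightarrow> nat \<Rightarrow> (nat \<Rightarrow> 'v) \<Rightarrow> (nat \<Rightarrow> 'v) \<Rightarrow> bool \<Rightarrow> (nat \<Rightarrow> nat \<Rightarrow> bool) \<Rightarrow> bool" where
  "xy_pattern G N x y c R \<longleftrightarrow> inj_on x {..N} \<and> inj_on y {..N} \<and>
     x ` {..N} \<subseteq> verts G \<and> y ` {..N} \<subseteq> verts G \<and>
     (\<forall>a\<le>N. \<forall>b\<le>N. x a \<noteq> y b \<and> adj G (x a) (y b) = R a b \<and>
        (a \<noteq> b \<longrightarrow> adj G (x a) (x b) \<and> adj G (y a) (y b) = c))"

lemma xy_patternD:
  assumes "xy_pattern G N x y c R" "a \<le> N" "b \<le> N"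
  shows "x a \<in> verts G" "y a \<in> verts G" "x a \<noteq> y b" "adj G (x a) (y b) \<longleftrightarrow> R a b"
    "a \<noteq> b \<Longrightarrow> adj G (x a) (x b)" "a \<noteq> b \<Longrightarrow> adj G (y a) (y b) \<longleftrightarrow> c"
    "x a = x b \<longleftrightarrow> a = b" "y a = y b \<longleftrightarrow> a = b"
  using assms by (auto simp: xy_pattern_def inj_on_def)

lemma xy_pattern_reindex:
  assumes P: "xy_pattern G N x y c R"
    and \<sigma>: "inj_on \<sigma> {..M}" "\<sigma> ` {..M} \<subseteq> {..N}" and \<tau>: "inj_on \<tau> {..M}" "\<tau> ` {..M} \<subseteq> {..N}"
  shows "xy_pattern G M (x \<circ> \<sigma>) (y \<circ> \<tau>) c (\<lambda>a b. R (\<sigma> a) (\<tau> b))"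
  unfolding xy_pattern_def
proof (intro conjI allI impI)
  show "inj_on (x \<circ> \<sigma>) {..M}" "inj_on (y \<circ> \<tau>) {..M}"
    using P \<sigma> \<tau> by (auto simp: xy_pattern_def intro: comp_inj_on inj_on_subset)
  show "(x \<circ> \<sigma>) ` {..M} \<subseteq> verts G" "(y \<circ> \<tau>) ` {..M} \<subseteq> verts G"
    using P \<sigma>(2) \<tau>(2) unfolding xy_pattern_def by (auto simp: image_subset_iff)
  fix a b assume ab: "a \<le> M" "b \<le> M"
  then have "\<sigma> a \<le> N" "\<sigma> b \<le> N" "\<tau> a \<le> N" "\<tau> b \<le> N"
    using \<sigma>(2) \<tau>(2) by auto
  note D = xy_patternD[OF P this(1,4)] xy_patternD[OF P this(1,2)] xy_patternD[OF P this(3,4)]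
  show "(x \<circ> \<sigma>) a \<noteq> (y \<circ> \<tau>) b" "adj G ((x \<circ> \<sigma>) a) ((y \<circ> \<tau>) b) = R (\<sigma> a) (\<tau> b)"
    using D by simp_all
  assume "a \<noteq> b"
  then have "\<sigma> a \<noteq> \<sigma> b" "\<tau> a \<noteq> \<tau> b"
    using ab \<sigma>(1) \<tau>(1) by (auto dest: inj_onD)
  then show "adj G ((x \<circ> \<sigma>) a) ((x \<circ> \<sigma>) b)" "adj G ((y \<circ> \<tau>) a) ((y \<circ> \<tau>) b) = c"
    using D by simp_all
qed

lemma xy_pattern_induced_sub:
  assumes G: "fin_simple_graph G" and P: "xy_pattern G n x y c R"
    and VH: "verts H = XY n"
    and HXX: "\<And>i j. i \<in> {1..n} \<Longrightarrow> j \<in> {1..n} \<Longrightarrow> adj H (Xv i) (Xv j) \<longleftrightarrow> i \<noteq> j"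
    and HYY: "\<And>i j. i \<in> {1..n} \<Longrightarrow> j \<in> {1..n} \<Longrightarrow> adj H (Yv i) (Yv j) \<longleftrightarrow> c \<and> i \<noteq> j"
    and HXY: "\<And>i j. i \<in> {1..n} \<Longrightarrow> j \<in> {1..n} \<Longrightarrow> adj H (Xv i) (Yv j) \<longleftrightarrow> R i j"
    and HYX: "\<And>i j. i \<in> {1..n} \<Longrightarrow> j \<in> {1..n} \<Longrightarrow> adj H (Yv j) (Xv i) \<longleftrightarrow> R i j"
  shows "induced_sub H G"
proof -
  define \<phi> where "\<phi> u = (case u of Xv i \<Rightarrow> x i | Yv j \<Rightarrow> y j | Cv \<Rightarrow> x 0)" for u
  have cases: "(\<exists>i\<in>{1..n}. u = Xv i) \<or> (\<exists>i\<in>{1..n}. u = Yv i)" if "u \<in> verts H" for u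
    using that by (auto simp: VH XY_def)
  have irr: "\<not> adj G v v" for v
    using adj_irrefl[OF G] .
  have "inj_on \<phi> (verts H)"
  proof (rule inj_onI)
    fix u v assume u: "u \<in> verts H" and v: "v \<in> verts H" and eq: "\<phi> u = \<phi> v"
    from cases[OF u] cases[OF v] show "u = v"
    proof (elim disjE bexE)
      fix i j assume "i \<in> {1..n}" "j \<in> {1..n}" "u = Xv i" "v = Xv j"
      then show ?thesis
        using eq xy_patternD(7)[OF P, of i j] by (simp add: \<phi>_def)
    next
      fix i j assume "i \<in> {1..n}" "j \<in> {1..n}" "u = Xv i" "v = Yv j"
      then show ?thesis
        using eq xy_patternD(3)[OF P, of i j] by (simp add: \<phi>_def)
    next
      fix i j assume "i \<in> {1..n}" "j \<in> {1..n}" "u = Yv i" "v = Xv j"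
      then show ?thesis
        using eq xy_patternD(3)[OF P, of j i] by (simp add: \<phi>_def)
    next
      fix i j assume "i \<in> {1..n}" "j \<in> {1..n}" "u = Yv i" "v = Yv j"
      then show ?thesis
        using eq xy_patternD(8)[OF P, of i j] by (simp add: \<phi>_def)
    qed
  qed
  moreover have "\<phi> ` verts H \<subseteq> verts G"
  proof
    fix a assume "a \<in> \<phi> ` verts H"
    then obtain u where "u \<in> verts H" "a = \<phi> u"
      by blast
    with cases[of u] show "a \<in> verts G"
      using xy_patternD(1,2)[OF P] by (auto simp: \<phi>_def)
  qed
  moreover have "adj G (\<phi> u) (\<phi> v) \<longleftrightarrow> adj H u v" if "u \<in> verts H" "v \<in> verts H" for u v
    using cases[OF that(1)] cases[OF that(2)]
  proof (elim disjE bexE)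
    fix i j assume ij: "i \<in> {1..n}" "j \<in> {1..n}" and "u = Xv i" "v = Xv j"
    then show ?thesis
      using HXX[OF ij] xy_patternD(5)[OF P, of i j] irr by (cases "i = j") (auto simp: \<phi>_def)
  next
    fix i j assume ij: "i \<in> {1..n}" "j \<in> {1..n}" and "u = Xv i" "v = Yv j"
    then show ?thesis
      using HXY[OF ij] xy_patternD(4)[OF P, of i j] by (simp add: \<phi>_def)
  next
    fix i j assume ij: "i \<in> {1..n}" "j \<in> {1..n}" and "u = Yv i" "v = Xv j"
    then show ?thesis
      using HYX[OF ij(2,1)] xy_patternD(4)[OF P, of j i] adj_commute[OF G, of "y i"] by (simp add: \<phi>_def)
  next
    fix i j assume ij: "i \<in> {1..n}" "j \<in> {1..n}" and "u = Yv i" "v = Yv j"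
    then show ?thesis
      using HYY[OF ij] xy_patternD(6)[OF P, of i j] irr by (cases "i = j") (auto simp: \<phi>_def)
  qed
  ultimately show ?thesis
    unfolding induced_sub_def by blast
qed

lemma xy_pattern_mono:
  assumes "xy_pattern G N x y c R" "M \<le> N"
  shows "xy_pattern G M x y c R"
  using xy_pattern_reindex[OF assms(1), of id M id] assms(2) by auto

lemma star_seq_induced_sub:
  assumes G: "fin_simple_graph G" and c: "c \<in> verts G"
    and I: "finite I" "card I = n" "\<forall>u\<in>I. adj G c u" "\<forall>u\<in>I. \<forall>v\<in>I. \<not> adj G u v"
  shows "induced_sub (star_seq n) G"
proof -
  obtain h where h: "bij_betw h {1..n} I"
    using ex_bij_betw_nat_finite_1[OF I(1)] I(2) by blast
  define \<phi> where "\<phi> u = (case u of Yv j \<Rightarrow> h j | _ \<Rightarrow> c)" for u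
  have hI: "h j \<in> I" if "j \<in> {1..n}" for j
    using h that by (auto simp: bij_betw_def)
  have hc: "h j \<noteq> c" if "j \<in> {1..n}" for j
    using I(3) hI[OF that] adj_irrefl[OF G] by blast
  have cases: "u = Cv \<or> (\<exists>j\<in>{1..n}. u = Yv j)" if "u \<in> verts (star_seq n)" for u
    using that by (auto simp: verts_pattern_seqs)
  have "inj_on \<phi> (verts (star_seq n))"
  proof (rule inj_onI)
    fix u v assume u: "u \<in> verts (star_seq n)" and v: "v \<in> verts (star_seq n)" and eq: "\<phi> u = \<phi> v"
    from cases[OF u] cases[OF v] show "u = v"
    proof (elim disjE bexE)
      fix i assume "i \<in> {1..n}" "u = Cv" "v = Yv i"
      then show ?thesis
        using eq hc[of i] by (simp add: \<phi>_def)
    next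
      fix i assume "i \<in> {1..n}" "u = Yv i" "v = Cv"
      then show ?thesis
        using eq hc[of i] by (simp add: \<phi>_def)
    next
      fix i j assume "i \<in> {1..n}" "j \<in> {1..n}" "u = Yv i" "v = Yv j"
      then show ?thesis
        using eq inj_onD[OF bij_betw_imp_inj_on[OF h]] by (simp add: \<phi>_def)
    qed simp
  qed
  moreover have "\<phi> ` verts (star_seq n) \<subseteq> verts G"
    using c hI I(3) adj_in_verts(2)[OF G] by (fastforce simp: \<phi>_def verts_pattern_seqs)
  moreover have "adj G (\<phi> u) (\<phi> v) \<longleftrightarrow> adj (star_seq n) u v"
    if "u \<in> verts (star_seq n)" "v \<in> verts (star_seq n)" for u v
    using cases[OF that(1)] cases[OF that(2)] I(3,4) hI adj_irrefl[OF G] adj_commute[OF G]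
    by (auto simp: \<phi>_def adj_star_seq)
  ultimately show ?thesis
    unfolding induced_sub_def by blast
qed

lemma star_le_p_fam:
  assumes G: "fin_simple_graph G" and c: "c \<in> verts G"
    and I: "finite I" "card I = n" "\<forall>u\<in>I. adj G c u" "\<forall>u\<in>I. \<forall>v\<in>I. \<not> adj G u v"
  shows "n \<le> p_fam frakB G"
  using le_p_fam[OF G, of star_seq n] star_seq_induced_sub[OF G c I] by (simp add: frakB_def)

lemma xy_pattern_star_le_p_fam:
  assumes G: "fin_simple_graph G" and P: "xy_pattern G n x y False R"
    and k: "k \<le> n" and R: "\<And>j. j \<in> {1..n} \<Longrightarrow> R k j"
  shows "n \<le> p_fam frakB G"
proof (rule star_le_p_fam[OF G xy_patternD(1)[OF P k k]])
  have "inj_on y {1..n}"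
    using P by (auto simp: xy_pattern_def intro: inj_on_subset)
  then show "card (y ` {1..n}) = n"
    by (simp add: card_image)
  show "\<forall>u\<in>y ` {1..n}. adj G (x k) u"
    using xy_patternD(4)[OF P k] R by auto
  show "\<forall>u\<in>y ` {1..n}. \<forall>v\<in>y ` {1..n}. \<not> adj G u v"
  proof (intro ballI)
    fix u v assume "u \<in> y ` {1..n}" "v \<in> y ` {1..n}"
    then obtain i j where "i \<in> {1..n}" "j \<in> {1..n}" "u = y i" "v = y j"
      by blast
    then show "\<not> adj G u v"
      using xy_patternD(6)[OF P, of i j] adj_irrefl[OF G, of u] by (cases "i = j") auto
  qed
qed simp

lemma matching_le_p_fam:
  assumes G: "fin_simple_graph G" and P: "xy_pattern G n x y c R"
    and R: "\<And>a b. a \<le> n \<Longrightarrow> b \<le> n \<Longrightarrow> R a b \<longleftrightarrow> a = b"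
  shows "n \<le> p_fam frakB G"
proof (cases c)
  case True
  have "induced_sub (MKK_seq n) G"
    by (rule xy_pattern_induced_sub[OF G P]) (auto simp: verts_pattern_seqs adj_MKK_seq R True)
  then show ?thesis
    by (rule le_p_fam[OF G, rotated]) (simp add: frakB_def)
next
  case False
  have "induced_sub (MKI_seq n) G"
    by (rule xy_pattern_induced_sub[OF G P]) (auto simp: verts_pattern_seqs adj_MKI_seq R False)
  then show ?thesis
    by (rule le_p_fam[OF G, rotated]) (simp add: frakB_def)
qed

lemma antimatching_le_p_fam:
  assumes G: "fin_simple_graph G" and P: "xy_pattern G n x y c R"
    and R: "\<And>a b. a \<le> n \<Longrightarrow> b \<le> n \<Longrightarrow> R a b \<longleftrightarrow> a \<noteq> b"
  shows "n \<le> p_fam frakB G"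
proof (cases c)
  case True
  have "induced_sub (AKK_seq n) G"
    by (rule xy_pattern_induced_sub[OF G P]) (auto simp: verts_pattern_seqs adj_AKK_seq R True)
  then show ?thesis
    by (rule le_p_fam[OF G, rotated]) (simp add: frakB_def)
next
  case False
  then show ?thesis
    using xy_pattern_star_le_p_fam[OF G, of n x y R 0] P R by simp
qed

lemma half_graph_le_p_fam:
  assumes G: "fin_simple_graph G" and P: "xy_pattern G n x y c R"
    and R: "\<And>a b. a \<le> n \<Longrightarrow> b \<le> n \<Longrightarrow> R a b \<longleftrightarrow> a \<le> b"
  shows "n \<le> p_fam frakB G"
proof (cases c)
  case True
  have "induced_sub (HKK_seq n) G"
    by (rule xy_pattern_induced_sub[OF G P]) (auto simp: verts_pattern_seqs adj_HKK_seq R True)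
  then show ?thesis
    by (rule le_p_fam[OF G, rotated]) (simp add: frakB_def)
next
  case False
  then show ?thesis
    using xy_pattern_star_le_p_fam[OF G, of n x y R 0] P R by simp
qed

text \<open>Reversing the order of the \<open>x\<close>s and of the \<open>y\<close>s, and dropping one of each, turns
  the strict lower half graph into the upper half graph \<open>a \<le> b\<close>.\<close>
lemma lower_half_graph_le_p_fam:
  assumes G: "fin_simple_graph G" and P: "xy_pattern G (Suc n) x y c R"
    and R: "\<And>a b. a \<le> Suc n \<Longrightarrow> b \<le> Suc n \<Longrightarrow> R a b \<longleftrightarrow> b < a"
  shows "n \<le> p_fam frakB G"
proof (rule half_graph_le_p_fam[OF G])
  show "xy_pattern G n (x \<circ> (\<lambda>a. Suc n - a)) (y \<circ> (\<lambda>b. n - b)) c (\<lambda>a b. R (Suc n - a) (n - b))"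
    by (rule xy_pattern_reindex[OF P]) (auto simp: inj_on_def)
  show "R (Suc n - a) (n - b) \<longleftrightarrow> a \<le> b" if "a \<le> n" "b \<le> n" for a b
    using R[of "Suc n - a" "n - b"] that by auto
qed

lemma ordered_xy_pattern_le_p_fam:
  assumes G: "fin_simple_graph G" and P: "xy_pattern G (Suc n) x y c R"
    and R: "\<And>a b. a \<le> Suc n \<Longrightarrow> b \<le> Suc n \<Longrightarrow>
      R a b \<longleftrightarrow> (if a = b then \<not> lower else if b < a then lower else upper)"
  shows "n \<le> p_fam frakB G"
proof -
  have P': "xy_pattern G n x y c R"
    using xy_pattern_mono[OF P] by simp
  consider "\<not> lower" "\<not> upper" | "lower" "upper" | "lower" "\<not> upper" | "\<not> lower" "upper"
    by blast
  then show ?thesis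
  proof cases
    case 1
    then show ?thesis
      using matching_le_p_fam[OF G P'] R by simp
  next
    case 2
    then show ?thesis
      using antimatching_le_p_fam[OF G P'] R by simp
  next
    case 3
    then show ?thesis
      using lower_half_graph_le_p_fam[OF G P] R by auto
  next
    case 4
    then show ?thesis
      using half_graph_le_p_fam[OF G P'] R by auto
  qed
qed

section \<open>Large quotient degree forces a large pattern\<close>

definition outer_nbrs :: "'v graph \<Rightarrow> 'v set \<Rightarrow> 'v \<Rightarrow> 'v set" where
  "outer_nbrs G X x = {w \<in> verts G. adj G x w} - X"

text \<open>Inequivalent vertices of a clique \<open>X\<close> are separated by a maximal clique, and a vertex of
  that clique non-adjacent to the other one lies outside \<open>X\<close>.\<close>
lemma inj_on_outer_nbrs:
  assumes G: "fin_simple_graph G" and X: "inequiv_clique G X"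
  shows "inj_on (outer_nbrs G X) X"
proof -
  have sep: "\<exists>w. w \<in> outer_nbrs G X a \<and> w \<notin> outer_nbrs G X b"
    if ab: "a \<in> X" "b \<in> X" and K: "max_clique G K" "a \<in> K" "b \<notin> K" for a b K
  proof -
    have "a \<noteq> b"
      using K by blast
    then have "adj G a b" "b \<in> verts G"
      using X ab by (auto simp: inequiv_clique_def Defs.clique_def)
    then obtain w where w: "w \<in> K" "w \<noteq> b" "\<not> adj G w b"
      using nonadj_of_not_in_max_clique[OF G K(1) _ K(3)] by blast
    have "w \<notin> X"
      using X ab(2) w(2,3) by (auto simp: inequiv_clique_def Defs.clique_def)
    moreover have "adj G a w"
      using max_clique_adj[OF K(1,2) w(1)] w(3) \<open>adj G a b\<close> by blast
    moreover have "w \<in> verts G"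
      using max_clique_subset_verts[OF K(1)] w(1) by blast
    ultimately show ?thesis
      using w(3) adj_commute[OF G, of b w] by (auto simp: outer_nbrs_def)
  qed
  show ?thesis
  proof (rule inj_onI, rule ccontr)
    fix a b assume ab: "a \<in> X" "b \<in> X" "outer_nbrs G X a = outer_nbrs G X b" "a \<noteq> b"
    then have "\<not> cequiv G a b"
      using X by (simp add: inequiv_clique_def)
    then obtain K where "max_clique G K" "a \<in> K \<and> b \<notin> K \<or> b \<in> K \<and> a \<notin> K"
      unfolding cequiv_iff by blast
    then show False
      using sep[of a b K] sep[of b a K] ab by blast
  qed
qed

text \<open>\<open>x k\<close> is the vertex of \<open>X\<close> whose outer neighbourhood is the \<open>k\<close>-th set of the splitting
  sequence.\<close>
lemma inequiv_clique_splitting: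
  assumes G: "fin_simple_graph G" and X: "inequiv_clique G X" and card: "2 ^ L \<le> card X"
  obtains x w d where
    "\<forall>k<L. x k \<in> X \<and> w k \<in> verts G - X \<and> (adj G (x k) (w k) \<longleftrightarrow> \<not> d k)"
    "\<forall>i k. i < k \<longrightarrow> k < L \<longrightarrow> (adj G (x k) (w i) \<longleftrightarrow> d i)"
proof -
  let ?T = "outer_nbrs G X"
  have "finite X"
    using X finite_verts[OF G] finite_subset by (auto simp: inequiv_clique_def Defs.clique_def)
  moreover have "card (?T ` X) = card X"
    using card_image[OF inj_on_outer_nbrs[OF G X]] .
  ultimately obtain w d A where
    A: "\<forall>k<L. A k \<in> ?T ` X \<and> w k \<in> \<Union>(?T ` X) \<and> (w k \<in> A k \<longleftrightarrow> \<not> d k)" and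
    d: "\<forall>i k. i < k \<longrightarrow> k < L \<longrightarrow> (w i \<in> A k \<longleftrightarrow> d i)"
    using splitting_sequence[of "?T ` X" L] card by auto
  define x where "x k = inv_into X ?T (A k)" for k
  have x: "x k \<in> X" "?T (x k) = A k" if "k < L" for k
    using A that by (auto simp: x_def inv_into_into f_inv_into_f)
  have w: "w k \<in> verts G - X" if "k < L" for k
    using A that by (auto simp: outer_nbrs_def)
  have adj_xw: "adj G (x k) (w j) \<longleftrightarrow> w j \<in> A k" if "k < L" "j < L" for k j
    using x[OF that(1)] w[OF that(2)] by (auto simp: outer_nbrs_def)
  show thesis
  proof (rule that[of x w d])
    show "\<forall>k<L. x k \<in> X \<and> w k \<in> verts G - X \<and> (adj G (x k) (w k) \<longleftrightarrow> \<not> d k)"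
      using x w adj_xw A by blast
    show "\<forall>i k. i < k \<longrightarrow> k < L \<longrightarrow> (adj G (x k) (w i) \<longleftrightarrow> d i)"
      using adj_xw d by auto
  qed
qed

text \<open>The diagonal colour differs from the colour below the diagonal, which forces both
  sequences to be injective.\<close>
lemma xy_pattern_of_ordered_adjacency:
  assumes G: "fin_simple_graph G" and X: "clique G X"
    and xy: "\<forall>a\<le>N. x a \<in> X \<and> y a \<in> verts G - X"
    and R: "\<forall>a\<le>N. \<forall>b\<le>N.
      adj G (x a) (y b) \<longleftrightarrow> (if a = b then \<not> lower else if b < a then lower else upper)"
    and c: "\<forall>a b. a < b \<longrightarrow> b \<le> N \<longrightarrow> adj G (y a) (y b) = c"
  shows "xy_pattern G N x y c (\<lambda>a b. if a = b then \<not> lower else if b < a then lower else upper)"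
  unfolding xy_pattern_def
proof (intro conjI allI impI)
  have R': "adj G (x a) (y a) = (\<not> lower)" "adj G (x b) (y a) = lower" "adj G (x b) (y b) = (\<not> lower)"
    if "a < b" "b \<le> N" for a b
    using R that by auto
  show inj_x: "inj_on x {..N}"
  proof (rule inj_onI, rule ccontr)
    fix a b assume "a \<in> {..N}" "b \<in> {..N}" "x a = x b" "a \<noteq> b"
    then show False
      using R'[of a b] R'[of b a] by (cases "a < b") auto
  qed
  show "inj_on y {..N}"
  proof (rule inj_onI, rule ccontr)
    fix a b assume "a \<in> {..N}" "b \<in> {..N}" "y a = y b" "a \<noteq> b"
    then show False
      using R'[of a b] R'[of b a] by (cases "a < b") auto
  qed
  have "X \<subseteq> verts G"
    using X by (simp add: Defs.clique_def)
  then show "x ` {..N} \<subseteq> verts G" "y ` {..N} \<subseteq> verts G"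
    using xy by auto
  fix a b assume ab: "a \<le> N" "b \<le> N"
  show "x a \<noteq> y b"
    using xy[rule_format, OF ab(1)] xy[rule_format, OF ab(2)] by auto
  show "adj G (x a) (y b) = (if a = b then \<not> lower else if b < a then lower else upper)"
    using R ab by blast
  assume "a \<noteq> b"
  then have "x a \<noteq> x b"
    using inj_onD[OF inj_x, of a b] ab by auto
  then show "adj G (x a) (x b)"
    using X xy ab by (auto simp: Defs.clique_def)
  from \<open>a \<noteq> b\<close> consider "a < b" | "b < a"
    by linarith
  then show "adj G (y a) (y b) = c"
  proof cases
    case 2
    then have "adj G (y b) (y a) = c"
      using c ab by simp
    then show ?thesis
      using adj_commute[OF G, of "y a" "y b"] by simp
  qed (use c ab in simp)
qed

lemma large_inequiv_clique_le_p_fam: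
  assumes G: "fin_simple_graph G" and X: "inequiv_clique G X"
    and card: "2 ^ pattern_bound (Suc (Suc n)) \<le> card X"
  shows "n \<le> p_fam frakB G"
proof -
  let ?L = "pattern_bound (Suc (Suc n))"
  obtain x w d where
    diag: "\<forall>k<?L. x k \<in> X \<and> w k \<in> verts G - X \<and> (adj G (x k) (w k) \<longleftrightarrow> \<not> d k)" and
    below: "\<forall>i k. i < k \<longrightarrow> k < ?L \<longrightarrow> (adj G (x k) (w i) \<longleftrightarrow> d i)"
    by (rule inequiv_clique_splitting[OF G X card])
  obtain t lower upper c where
    t1: "\<forall>a\<le>Suc n. t a < ?L \<and> d (t a) = lower" and
    t2: "\<forall>a a'. a < a' \<longrightarrow> a' \<le> Suc n \<longrightarrow>
      t a < t a' \<and> adj G (x (t a)) (w (t a')) = upper \<and> adj G (w (t a)) (w (t a')) = c"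
    by (rule ordered_pattern[of "Suc n" d "\<lambda>k j. adj G (x k) (w j)" "\<lambda>i j. adj G (w i) (w j)"])
  have "\<forall>a\<le>Suc n. \<forall>a'\<le>Suc n. adj G (x (t a)) (w (t a')) \<longleftrightarrow>
      (if a = a' then \<not> lower else if a' < a then lower else upper)"
    using t1 t2 diag below by (auto elim!: linorder_neqE_nat)
  then have "xy_pattern G (Suc n) (x \<circ> t) (w \<circ> t) c
      (\<lambda>a a'. if a = a' then \<not> lower else if a' < a then lower else upper)"
    using X t1 t2 diag by (intro xy_pattern_of_ordered_adjacency[OF G]) (auto simp: inequiv_clique_def)
  then show ?thesis
    by (rule ordered_xy_pattern_le_p_fam[OF G]) simp
qed

lemma class_nbrs_representatives:
  assumes G: "fin_simple_graph G" and v: "v \<in> verts G"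
  obtains R where "R \<subseteq> verts G" "card R = card (class_nbrs G v)" "\<forall>u\<in>R. adj G v u"
    "\<forall>a\<in>R. \<forall>b\<in>R. a \<noteq> b \<longrightarrow> \<not> cequiv G a b"
proof -
  have "\<exists>u\<in>D. adj G v u" if D: "D \<in> class_nbrs G v" for D
  proof -
    obtain a b where ab: "D \<in> cclasses G" "cclass G v \<noteq> D" "a \<in> cclass G v" "b \<in> D" "adj G a b"
      using D by (auto simp: class_nbrs_def adj_quotient_graph)
    have "b \<noteq> v"
      using cclass_of_mem[OF ab(1) ab(4)] ab(2) by blast
    then have "adj G v b"
      using adj_cequiv[OF G _ ab(5)] ab(3) by (simp add: cclass_def)
    then show ?thesis
      using ab(4) by blast
  qed
  then obtain rep where rep: "\<forall>D\<in>class_nbrs G v. rep D \<in> D \<and> adj G v (rep D)"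
    by metis
  have rep_class: "D = cclass G (rep D)" if "D \<in> class_nbrs G v" for D
    using rep that cclass_of_mem[of D G "rep D"] by (simp add: class_nbrs_def)
  have "inj_on rep (class_nbrs G v)"
    using rep_class by (metis inj_onI)
  show thesis
  proof (rule that[of "rep ` class_nbrs G v"])
    show "rep ` class_nbrs G v \<subseteq> verts G"
      using rep adj_in_verts(2)[OF G, of v] by blast
    show "card (rep ` class_nbrs G v) = card (class_nbrs G v)"
      using \<open>inj_on rep (class_nbrs G v)\<close> by (rule card_image)
    show "\<forall>u\<in>rep ` class_nbrs G v. adj G v u"
      using rep by blast
    show "\<forall>a\<in>rep ` class_nbrs G v. \<forall>b\<in>rep ` class_nbrs G v. a \<noteq> b \<longrightarrow> \<not> cequiv G a b"
    proof (intro ballI impI notI)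
      fix a b assume "a \<in> rep ` class_nbrs G v" "b \<in> rep ` class_nbrs G v" "a \<noteq> b" "cequiv G a b"
      then obtain D D' where D: "D \<in> class_nbrs G v" "D' \<in> class_nbrs G v" "a = rep D" "b = rep D'"
        by blast
      then have "a \<in> verts G"
        using rep adj_in_verts(2)[OF G, of v "rep D"] by blast
      then have "cclass G a = cclass G b"
        using cclass_eq_iff[of a G b] \<open>cequiv G a b\<close> by simp
      then have "D = D'"
        using rep_class[OF D(1)] rep_class[OF D(2)] D(3,4) by simp
      then show False
        using \<open>a \<noteq> b\<close> D(3,4) by simp
    qed
  qed
qed

definition Delta_bound :: "nat \<Rightarrow> nat" where
  "Delta_bound n = (let m = 2 ^ pattern_bound (Suc (Suc n)) + n in ES 2 m m)"

text \<open>Representatives of the neighbouring classes of a vertex of maximum quotient degree,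
  chosen adjacent to it, contain by Ramsey's theorem either a large clique of inequivalent
  vertices or a large independent set, which spans a star with the vertex.\<close>
lemma le_p_fam_if_Delta_bound_le:
  assumes G: "fin_simple_graph G" and D: "Delta_bound n \<le> Delta_tilde G"
  shows "n \<le> p_fam frakB G"
proof -
  define m where "m = 2 ^ pattern_bound (Suc (Suc n)) + n"
  have "0 < Delta_bound n"
    by (simp add: Delta_bound_def ES2_choose Let_def)
  then have "0 < Delta_tilde G"
    using D by linarith
  then obtain v where v: "v \<in> verts G" "card (class_nbrs G v) = Delta_tilde G"
    by (rule Delta_tilde_attained[OF G])
  obtain R where R: "R \<subseteq> verts G" "card R = Delta_tilde G" "\<forall>u\<in>R. adj G v u"
    "\<forall>a\<in>R. \<forall>b\<in>R. a \<noteq> b \<longrightarrow> \<not> cequiv G a b"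
    using class_nbrs_representatives[OF G v(1)] v(2) by metis
  have "finite R"
    using R(1) finite_verts[OF G] finite_subset by blast
  moreover have "ES 2 m m \<le> card R"
    using D R(2) by (simp add: Delta_bound_def m_def Let_def)
  ultimately obtain T c where T: "T \<subseteq> R" "card T = m" "\<forall>a\<in>T. \<forall>b\<in>T. a \<noteq> b \<longrightarrow> adj G a b = c"
    using adj_commute[OF G] by (rule ramsey_sym)
  show ?thesis
  proof (cases c)
    case True
    then have "inequiv_clique G T"
      unfolding inequiv_clique_def Defs.clique_def using T R(1,4) by blast
    then show ?thesis
      using large_inequiv_clique_le_p_fam[OF G] T(2) by (simp add: m_def)
  next
    case False
    have "m \<le> p_fam frakB G"
    proof (rule star_le_p_fam[OF G v(1)])
      show "finite T" "card T = m" "\<forall>u\<in>T. adj G v u"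
        using T R(3) \<open>finite R\<close> finite_subset by auto
      show "\<forall>u\<in>T. \<forall>w\<in>T. \<not> adj G u w"
      proof (intro ballI)
        fix u w assume "u \<in> T" "w \<in> T"
        then show "\<not> adj G u w"
          using T(3) False adj_irrefl[OF G, of u] by (cases "u = w") auto
      qed
    qed
    then show ?thesis
      by (simp add: m_def)
  qed
qed

lemma Delta_tilde_less_Delta_bound:
  assumes "fin_simple_graph G"
  shows "Delta_tilde G < Delta_bound (Suc (p_fam frakB G))"
  using le_p_fam_if_Delta_bound_le[OF assms, of "Suc (p_fam frakB G)"] by linarith

definition param_bounded :: "('v graph \<Rightarrow> nat) \<Rightarrow> ('v graph \<Rightarrow> nat) \<Rightarrow> bool" where
  "param_bounded p q \<longleftrightarrow> (\<exists>f. \<forall>G. fin_simple_graph G \<longrightarrow> p G \<le> f (q G))"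

lemma param_equiv_iff: "param_equiv p q \<longleftrightarrow> param_bounded p q \<and> param_bounded q p"
  unfolding param_equiv_def param_bounded_def by blast

lemma param_boundedI: "(\<And>G. fin_simple_graph G \<Longrightarrow> p G \<le> f (q G)) \<Longrightarrow> param_bounded p q"
  unfolding param_bounded_def by blast

lemma param_bounded_le: "(\<And>G. fin_simple_graph G \<Longrightarrow> p G \<le> q G) \<Longrightarrow> param_bounded p q"
  by (rule param_boundedI[where f = id]) simp

lemma param_bounded_trans:
  fixes p q r :: "'v graph \<Rightarrow> nat"
  assumes "param_bounded p q" "param_bounded q r"
  shows "param_bounded p r"
proof -
  obtain f g where f: "\<forall>G. fin_simple_graph G \<longrightarrow> p G \<le> f (q G)"
    and g: "\<forall>G. fin_simple_graph G \<longrightarrow> q G \<le> g (r G)"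
    using assms by (auto simp: param_bounded_def)
  show ?thesis
  proof (rule param_boundedI)
    fix G :: "'v graph" assume G: "fin_simple_graph G"
    have "q G \<in> {..g (r G)}"
      using g[rule_format, OF G] by simp
    then have "f (q G) \<le> Max (f ` {..g (r G)})"
      by (simp add: Max_ge)
    then show "p G \<le> Max (f ` {..g (r G)})"
      using f[rule_format, OF G] by linarith
  qed
qed

lemma param_bounded_max:
  fixes p q r :: "'v graph \<Rightarrow> nat"
  assumes "param_bounded p r" "param_bounded q r"
  shows "param_bounded (\<lambda>G. max (p G) (q G)) r"
proof -
  obtain f g where f: "\<forall>G. fin_simple_graph G \<longrightarrow> p G \<le> f (r G)"
    and g: "\<forall>G. fin_simple_graph G \<longrightarrow> q G \<le> g (r G)"
    using assms by (auto simp: param_bounded_def)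
  show ?thesis
  proof (rule param_boundedI)
    fix G :: "'v graph" assume "fin_simple_graph G"
    then have "p G \<le> f (r G)" "q G \<le> g (r G)"
      using f g by blast+
    then show "max (p G) (q G) \<le> max (f (r G)) (g (r G))"
      by (rule max.mono)
  qed
qed

lemma param_bounded_cideg_omega_tilde_Delta_tilde:
  "param_bounded (\<lambda>G. max (cideg G) (omega_tilde G)) Delta_tilde"
proof (rule param_bounded_max)
  show "param_bounded cideg Delta_tilde"
    by (rule param_boundedI[where f = "\<lambda>k. 2 ^ (k + 1)"]) (rule cideg_le_exp_Delta_tilde)
  show "param_bounded omega_tilde Delta_tilde"
    by (rule param_boundedI[where f = "\<lambda>k. k + 1"]) (rule omega_tilde_le_Delta_tilde)
qed

lemma param_bounded_cideg_omega_tilde_cdeg: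
  "param_bounded (\<lambda>G. max (cideg G) (omega_tilde G)) cdeg"
proof (rule param_bounded_max)
  show "param_bounded cideg cdeg"
    by (rule param_boundedI[where f = "\<lambda>k. k + 1"]) (rule cideg_le_cdeg)
  show "param_bounded omega_tilde cdeg"
    by (rule param_boundedI[where f = "\<lambda>k. 2 ^ (k + 1)"]) (rule omega_tilde_le_exp_cdeg)
qed

lemma param_bounded_cdeg_cideg_omega_tilde:
  "param_bounded cdeg (\<lambda>G. max (cideg G) (omega_tilde G))"
proof (rule param_boundedI[where f = "\<lambda>k. k * k"])
  fix G :: "'v graph" assume "fin_simple_graph G"
  then have "cdeg G \<le> omega_tilde G * cideg G"
    by (rule cdeg_le_omega_tilde_mult_cideg)
  also have "\<dots> \<le> max (cideg G) (omega_tilde G) * max (cideg G) (omega_tilde G)"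
    by (intro mult_mono) simp_all
  finally show "cdeg G \<le> max (cideg G) (omega_tilde G) * max (cideg G) (omega_tilde G)" .
qed

lemma param_bounded_Delta_tilde_p_fam: "param_bounded Delta_tilde (p_fam frakB)"
  by (rule param_boundedI[where f = "\<lambda>k. Delta_bound (Suc k)"])
    (simp add: Delta_tilde_less_Delta_bound less_imp_le)

theorem corollary7p6:
  shows "param_equiv (p_fam frakB) Delta_tilde
       \<and> param_equiv (p_fam frakB) cdeg
       \<and> param_equiv (p_fam frakB) (\<lambda>G. max (cideg G) (omega_tilde G))
       \<and> param_equiv (p_fam frakB) (\<lambda>G. max (alpha_star G) (omega_tilde G))
       \<and> param_equiv (p_fam frakB) (\<lambda>G. max (theta_star G) (omega_tilde G))"
proof -
  let ?p = "p_fam frakB :: nat graph \<Rightarrow> nat"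
  let ?\<alpha> = "\<lambda>G. max (alpha_star G) (omega_tilde G)"
  let ?\<theta> = "\<lambda>G. max (theta_star G) (omega_tilde G)"
  let ?c = "\<lambda>G. max (cideg G) (omega_tilde G)"
  have p_\<alpha>: "param_bounded ?p ?\<alpha>"
    by (intro param_bounded_le p_fam_le_max_alpha_star_omega_tilde)
  have \<alpha>_\<theta>: "param_bounded ?\<alpha> ?\<theta>"
    by (intro param_bounded_le max.mono alpha_star_le_theta_star order_refl)
  have \<theta>_c: "param_bounded ?\<theta> ?c"
    by (intro param_bounded_le max.mono theta_star_le_cideg order_refl)
  have c_p: "param_bounded ?c ?p"
    using param_bounded_cideg_omega_tilde_Delta_tilde param_bounded_Delta_tilde_p_fam
    by (rule param_bounded_trans)
  have p_\<theta>: "param_bounded ?p ?\<theta>" and p_c: "param_bounded ?p ?c"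
    using param_bounded_trans[OF p_\<alpha> \<alpha>_\<theta>] by (auto intro: param_bounded_trans[OF _ \<theta>_c])
  have \<theta>_p: "param_bounded ?\<theta> ?p" and \<alpha>_p: "param_bounded ?\<alpha> ?p"
    using param_bounded_trans[OF \<theta>_c c_p] by (auto intro: param_bounded_trans[OF \<alpha>_\<theta>])
  show ?thesis
    unfolding param_equiv_iff
    using p_\<alpha> \<alpha>_p p_\<theta> \<theta>_p p_c c_p param_bounded_Delta_tilde_p_fam
      param_bounded_trans[OF p_c param_bounded_cideg_omega_tilde_Delta_tilde]
      param_bounded_trans[OF p_c param_bounded_cideg_omega_tilde_cdeg]
      param_bounded_trans[OF param_bounded_cdeg_cideg_omega_tilde c_p]
    by blast
qed

end
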